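(* Let $\vec p=(p_1,\dots,p_n)$, $\vec s=(s_1,\dots,s_n)$ with $1\le p_i,s_i\le\infty$, and $1\le\alpha\le\infty$. The space $(L^{\vec p},L^{\vec s})^{\alpha}(\mathbb R^n)$ is nontrivial (i.e. contains a function that is not almost everywhere zero) if and only if $$\frac1n\sum_{i=1}^n\frac1{s_i}\le\frac1\alpha\le\frac1n\sum_{i=1}^n\frac1{p_i}.$$
   Context: For $\vec p=(p_1,\dots,p_n)$ with $1\le p_i\le\infty$, the mixed-norm Lebesgue space $L^{\vec p}(\mathbb R^n)$ consists of measurable $f$ with $\|f\|_{L^{\vec p}}=\Big(\int_{\mathbb R}\cdots\Big(\int_{\mathbb R}|f(x)|^{p_1}\,dx_1\Big)^{p_2/p_1}\cdots dx_n\Big)^{1/p_n}<\infty$ (usual modification when some $p_i=\infty$). $B(y,r)$ denotes the open ball of center $y$ and radius $r$, $|B|$ its Lebesgue measure, $\chi_E$ the characteristic function of $E$. The space $(L^{\vec p},L^{\vec s})^{\alpha}(\mathbb R^n)$ is the set of $f\in L^1_{loc}(\mathbb R^n)$ with $$\|f\|_{(L^{\vec p},L^{\vec s})^{\alpha}}:=\sup_{r>0}\Big\|\,y\mapsto |B(y,r)|^{\frac1\alpha-\frac1n\sum_{i=1}^n\frac1{p_i}-\frac1n\sum_{i=1}^n\frac1{s_i}}\,\|f\chi_{B(y,r)}\|_{L^{\vec p}}\Big\|_{L^{\vec s}}<\infty,$$ where the outer $L^{\vec s}$-norm is taken in the variable $y$. *)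

theory Defs
  imports "HOL-Analysis.Analysis"
begin

text \<open>Points of R^n are represented as functions nat => real that are extensional
  outside {..<n} (the carrier of the product measure), coordinate x_{i+1} being x i.\<close>

definition Rn :: "nat \<Rightarrow> (nat \<Rightarrow> real) measure" where
  "Rn n = PiM {..<n} (\<lambda>_. lborel)"

definition Rball :: "nat \<Rightarrow> (nat \<Rightarrow> real) \<Rightarrow> real \<Rightarrow> (nat \<Rightarrow> real) set" where
  "Rball n y r = {x \<in> space (Rn n). sqrt (\<Sum>i<n. (x i - y i)^2) < r}"

definition enn_powr :: "ennreal \<Rightarrow> real \<Rightarrow> ennreal" where
  "enn_powr x r = (if x = top then top else ennreal (enn2real x powr r))"

definition Lp1 :: "ereal \<Rightarrow> (real \<Rightarrow> ennreal) \<Rightarrow> ennreal" where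
  "Lp1 p g = (if p = \<infinity> then Inf {c. AE t in lborel. g t \<le> c}
              else enn_powr (\<integral>\<^sup>+ t. enn_powr (g t) (real_of_ereal p) \<partial>lborel)
                            (1 / real_of_ereal p))"

fun mixnorm_aux :: "nat \<Rightarrow> ereal list \<Rightarrow> ((nat \<Rightarrow> real) \<Rightarrow> ennreal) \<Rightarrow> (nat \<Rightarrow> real) \<Rightarrow> ennreal" where
  "mixnorm_aux k [] f = f"
| "mixnorm_aux k (p # ps) f = mixnorm_aux (Suc k) ps (\<lambda>x. Lp1 p (\<lambda>t. f (x(k := t))))"

text \<open>Mixed norm ||f||_{L^ps} on R^n, n = length ps; innermost integral over x_1.\<close>
definition mixnorm_enn :: "ereal list \<Rightarrow> ((nat \<Rightarrow> real) \<Rightarrow> ennreal) \<Rightarrow> ennreal" where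
  "mixnorm_enn ps g = mixnorm_aux 0 ps g (\<lambda>_. undefined)"

definition mixnorm :: "ereal list \<Rightarrow> ((nat \<Rightarrow> real) \<Rightarrow> real) \<Rightarrow> ennreal" where
  "mixnorm ps f = mixnorm_enn ps (\<lambda>x. ennreal \<bar>f x\<bar>)"

definition inv_exp :: "ereal \<Rightarrow> real" where
  "inv_exp p = (if p = \<infinity> then 0 else 1 / real_of_ereal p)"

definition L1loc :: "nat \<Rightarrow> ((nat \<Rightarrow> real) \<Rightarrow> real) set" where
  "L1loc n = {f. f \<in> borel_measurable (Rn n) \<and>
      (\<forall>y\<in>space (Rn n). \<forall>r>0. set_integrable (Rn n) (Rball n y r) f)}"

definition amalgam_norm :: "ereal list \<Rightarrow> ereal list \<Rightarrow> ereal \<Rightarrow> ((nat \<Rightarrow> real) \<Rightarrow> real) \<Rightarrow> ennreal" where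
  "amalgam_norm ps ss \<alpha> f =
     (let n = length ps;
          e = inv_exp \<alpha> - (\<Sum>p\<leftarrow>ps. inv_exp p) / real n - (\<Sum>s\<leftarrow>ss. inv_exp s) / real n
      in SUP r\<in>{0<..}. mixnorm_enn ss (\<lambda>y. ennreal (measure (Rn n) (Rball n y r) powr e)
                                        * (mixnorm ps (\<lambda>x. indicator (Rball n y r) x * f x))))"

definition amalgam_space :: "ereal list \<Rightarrow> ereal list \<Rightarrow> ereal \<Rightarrow> ((nat \<Rightarrow> real) \<Rightarrow> real) set" where
  "amalgam_space ps ss \<alpha> = {f \<in> L1loc (length ps). amalgam_norm ps ss \<alpha> f < \<infinity>}"

end

theory Submission
  imports Defs "HOL-Real_Asymp.Real_Asymp"
begin

text \<open>
  For a fixed radius r the amalgam quantity of f is the mixed s-norm in y of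
  |B(y,r)|^e times the mixed p-norm of f on B(y,r), where n e = n/\<alpha> - P - S
  with P = \<Sum>1/p_i and S = \<Sum>1/s_i.

  Sufficiency: for the indicator of the unit cube the inner norm is at most
  min(1, (2r)^P) and vanishes unless y lies in a cube of side 1 + 2r, so the
  quantity is O(r^(n e) min(1, r^P) (1 + r)^S), which stays bounded exactly
  when S \<le> n/\<alpha> \<le> P.

  Necessity: Hoelder's inequality on cubes reverses these estimates. Let a cube
  C carry positive mass of |f|. For large r every ball B(y,r) with y in a cube
  of side r/n contains C, which bounds the quantity below by a multiple of
  r^(n/\<alpha> - P). For small r, Fubini gives that the integral over y of the
  mass of |f| in B(y,r) is at least (r/n)^n times the mass of |f| in C, and
  Hoelder's inequality in both variables bounds the quantity below by a
  multiple of r^(n/\<alpha> - S).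
\<close>

lemma enn_powr_ennreal: "0 \<le> x \<Longrightarrow> enn_powr (ennreal x) r = ennreal (x powr r)"
  by (simp add: enn_powr_def)

lemma enn_powr_1 [simp]: "enn_powr x 1 = x"
  by (cases x) (auto simp: enn_powr_def)

lemma enn_powr_top [simp]: "enn_powr top r = top"
  by (simp add: enn_powr_def)

lemma enn_powr_eq_0_iff: "0 < r \<Longrightarrow> enn_powr x r = 0 \<longleftrightarrow> x = 0"
  by (cases x) (auto simp: enn_powr_def)

lemma enn_powr_less_top: "x < top \<Longrightarrow> enn_powr x r < top"
  by (simp add: enn_powr_def)

lemma enn_powr_mono: "0 \<le> r \<Longrightarrow> x \<le> y \<Longrightarrow> enn_powr x r \<le> enn_powr y r"
  by (cases x; cases y) (auto simp: enn_powr_def top_unique intro!: ennreal_leI powr_mono2)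

lemma enn_powr_mult:
  assumes "0 < r" and "a < top"
  shows "enn_powr (a * b) r = enn_powr a r * enn_powr b r"
proof -
  obtain x where x: "a = ennreal x" "0 \<le> x"
    using assms(2) by (cases a) auto
  show ?thesis
  proof (cases b)
    case (real y)
    then show ?thesis
      using x by (simp add: enn_powr_ennreal powr_mult flip: ennreal_mult)
  next
    case top
    then show ?thesis
      using x assms(1) by (cases "x = 0") (auto simp: enn_powr_def ennreal_mult_top)
  qed
qed

lemma enn_powr_powr_inverse: "0 < p \<Longrightarrow> enn_powr (enn_powr x p) (1 / p) = x"
  by (cases x) (auto simp: enn_powr_def powr_powr)

lemma enn_powr_indicator: "0 < r \<Longrightarrow> enn_powr (indicator A t) r = indicator A t"
  by (simp add: indicator_def enn_powr_def)

lemma measurable_enn_powr [measurable (raw)]: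
  assumes [measurable]: "f \<in> borel_measurable M"
  shows "(\<lambda>x. enn_powr (f x) r) \<in> borel_measurable M"
  unfolding enn_powr_def by measurable

lemma nn_integral_measurable_minorant:
  fixes f :: "'a \<Rightarrow> ennreal"
  obtains h where "h \<in> borel_measurable M" "\<And>x. h x \<le> f x" "integral\<^sup>N M h = integral\<^sup>N M f"
proof -
  let ?A = "{g. simple_function M g \<and> g \<le> f}"
  have "(\<lambda>_. 0) \<in> ?A"
    by (auto simp: le_fun_def)
  then obtain F :: "nat \<Rightarrow> ennreal"
    where F: "range F \<subseteq> integral\<^sup>S M ` ?A" "Sup (integral\<^sup>S M ` ?A) = Sup (range F)"
    using ennreal_SUP_countable_SUP[of "?A" "integral\<^sup>S M"] by blast
  have "\<forall>i. \<exists>g. g \<in> ?A \<and> F i = integral\<^sup>S M g"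
    using F(1) by blast
  then obtain g where g: "\<And>i. g i \<in> ?A" "\<And>i. F i = integral\<^sup>S M (g i)"
    by metis
  define h where "h x = (SUP i. g i x)" for x
  have h_meas: "h \<in> borel_measurable M"
    unfolding h_def using g(1)
    by (intro borel_measurable_SUP) (auto intro: borel_measurable_simple_function)
  have h_le: "h x \<le> f x" for x
    using g(1) unfolding h_def by (auto simp: le_fun_def intro!: SUP_least)
  have "integral\<^sup>N M f = (SUP i. integral\<^sup>S M (g i))"
    using F(2) g(2) by (simp add: nn_integral_def)
  also have "\<dots> = (SUP i. integral\<^sup>N M (g i))"
    using g(1) by (simp add: nn_integral_eq_simple_integral)
  also have "\<dots> \<le> integral\<^sup>N M h"
    by (intro SUP_least nn_integral_mono) (auto simp: h_def intro: SUP_upper)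
  finally have "integral\<^sup>N M f \<le> integral\<^sup>N M h" .
  moreover have "integral\<^sup>N M h \<le> integral\<^sup>N M f"
    using h_le by (intro nn_integral_mono)
  ultimately show ?thesis
    using that h_meas h_le by (metis antisym)
qed

text \<open>The iterated norm integrates slices of functions that need not be measurable.\<close>

lemma nn_integral_cmult_nonmeasurable:
  fixes f :: "'a \<Rightarrow> ennreal"
  assumes "c < top"
  shows "(\<integral>\<^sup>+x. c * f x \<partial>M) = c * integral\<^sup>N M f"
proof (cases "c = 0")
  case False
  obtain h where h: "h \<in> borel_measurable M" "\<And>x. h x \<le> f x" "integral\<^sup>N M h = integral\<^sup>N M f"
    using nn_integral_measurable_minorant[of M f] by metis
  obtain h' where h': "h' \<in> borel_measurable M" "\<And>x. h' x \<le> c * f x"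
      "integral\<^sup>N M h' = (\<integral>\<^sup>+x. c * f x \<partial>M)"
    using nn_integral_measurable_minorant[of M "\<lambda>x. c * f x"] by metis
  have c: "c \<noteq> 0" "c \<noteq> top"
    using False assms by auto
  have "c * integral\<^sup>N M f = (\<integral>\<^sup>+x. c * h x \<partial>M)"
    using h by (simp add: nn_integral_cmult)
  also have "\<dots> \<le> (\<integral>\<^sup>+x. c * f x \<partial>M)"
    using h by (intro nn_integral_mono mult_left_mono) auto
  finally have ge: "c * integral\<^sup>N M f \<le> (\<integral>\<^sup>+x. c * f x \<partial>M)" .
  have "c * (h' x / c) = h' x" for x
    using c by (simp add: ennreal_times_divide mult_divide_eq_ennreal mult.commute[of c])
  then have "(\<integral>\<^sup>+x. c * f x \<partial>M) = (\<integral>\<^sup>+x. c * (h' x / c) \<partial>M)"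
    using h'(3) by simp
  also have "\<dots> = c * (\<integral>\<^sup>+x. h' x / c \<partial>M)"
    using h' by (simp add: nn_integral_cmult)
  also have "\<dots> \<le> c * integral\<^sup>N M f"
    by (intro nn_integral_mono mult_left_mono)
      (use h'(2) c in \<open>auto intro!: divide_le_posI_ennreal simp: zero_less_iff_neq_zero\<close>)
  finally show ?thesis
    using ge by (rule antisym)
qed simp

lemma AE_le_Inf_AE_upper_bounds:
  fixes g :: "'a \<Rightarrow> ennreal"
  shows "AE t in M. g t \<le> Inf {c. AE t in M. g t \<le> c}"
proof -
  let ?S = "{c. AE t in M. g t \<le> c}"
  have "top \<in> ?S"
    by simp
  then obtain F :: "nat \<Rightarrow> ennreal" where F: "range F \<subseteq> ?S" "Inf ?S = (INF i. F i)"
    using ennreal_Inf_countable_INF[of ?S] by blast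
  then have "AE t in M. \<forall>i. g t \<le> F i"
    by (auto simp: AE_all_countable)
  then show ?thesis
    by eventually_elim (use F(2) in \<open>auto intro: INF_greatest\<close>)
qed

lemma ereal_ge_1_cases:
  assumes "(1::ereal) \<le> p"
  obtains "p = \<infinity>" | r where "p = ereal r" "1 \<le> r"
  using assms by (cases p) auto

lemma Lp1_ereal: "Lp1 (ereal r) g = enn_powr (\<integral>\<^sup>+ t. enn_powr (g t) r \<partial>lborel) (1 / r)"
  by (simp add: Lp1_def)

lemma Lp1_infinity: "Lp1 \<infinity> g = Inf {c. AE t in lborel. g t \<le> c}"
  by (simp add: Lp1_def)

lemma Lp1_one: "Lp1 1 g = (\<integral>\<^sup>+ t. g t \<partial>lborel)"
  by (simp add: Lp1_def one_ereal_def)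

lemma Lp1_mono:
  assumes "1 \<le> p" and "\<And>t. g t \<le> h t"
  shows "Lp1 p g \<le> Lp1 p h"
  using assms(1)
proof (cases rule: ereal_ge_1_cases)
  case 1
  have "{c. AE t in lborel. h t \<le> c} \<subseteq> {c. AE t in lborel. g t \<le> c}"
    using assms(2) by (auto elim: eventually_mono intro: order_trans)
  then show ?thesis
    using 1 by (simp add: Lp1_infinity Inf_superset_mono)
qed (auto simp: Lp1_ereal intro!: enn_powr_mono nn_integral_mono assms(2))

lemma Lp1_cmult:
  assumes "1 \<le> p" and c: "c < top"
  shows "Lp1 p (\<lambda>t. c * g t) = c * Lp1 p g"
  using assms(1)
proof (cases rule: ereal_ge_1_cases)
  case 1
  show ?thesis
  proof (cases "c = 0")
    case False
    let ?S = "{d. AE t in lborel. g t \<le> d}"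
    have "AE t in lborel. c * g t \<le> c * Inf ?S"
      using AE_le_Inf_AE_upper_bounds[of g lborel] by eventually_elim (rule mult_left_mono, auto)
    then have le: "Lp1 p (\<lambda>t. c * g t) \<le> c * Inf ?S"
      using 1 by (auto simp: Lp1_infinity intro: Inf_lower)
    have "c * Inf ?S \<le> d" if "AE t in lborel. c * g t \<le> d" for d
    proof -
      have "AE t in lborel. g t \<le> d / c"
        using that
        by eventually_elim (metis False c divide_right_mono_ennreal mult.commute
            mult_divide_eq_ennreal top.not_eq_extremum)
      then have "c * Inf ?S \<le> c * (d / c)"
        by (intro mult_left_mono Inf_lower) auto
      also have "\<dots> = d"
        using False c by (metis ennreal_times_divide mult.commute mult_divide_eq_ennreal
            top.not_eq_extremum)
      finally show ?thesis .
    qed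
    then have "c * Inf ?S \<le> Lp1 p (\<lambda>t. c * g t)"
      using 1 by (auto simp: Lp1_infinity intro: Inf_greatest)
    with le show ?thesis
      using 1 by (simp add: Lp1_infinity)
  qed (use 1 in \<open>simp add: Lp1_infinity bot_ennreal\<close>)
next
  case (2 r)
  have "(\<integral>\<^sup>+ t. enn_powr (c * g t) r \<partial>lborel) = enn_powr c r * (\<integral>\<^sup>+ t. enn_powr (g t) r \<partial>lborel)"
    using 2 c by (simp add: enn_powr_mult nn_integral_cmult_nonmeasurable enn_powr_less_top)
  then show ?thesis
    using 2 c by (simp add: Lp1_ereal enn_powr_mult enn_powr_less_top enn_powr_powr_inverse)
qed

lemma Lp1_zero: "1 \<le> p \<Longrightarrow> Lp1 p (\<lambda>_. 0) = 0"
  using Lp1_cmult[of p 0 "\<lambda>_. 0"] by simp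

lemma Lp1_indicator_interval_le:
  assumes "1 \<le> p" and "a < b"
  shows "Lp1 p (indicator {a..b}) \<le> ennreal ((b - a) powr inv_exp p)"
  using assms(1)
proof (cases rule: ereal_ge_1_cases)
  case 1
  have "AE t in lborel. (indicator {a..b} t :: ennreal) \<le> 1"
    by (simp add: indicator_def)
  then show ?thesis
    using 1 assms(2) by (simp add: Lp1_infinity Inf_lower inv_exp_def)
next
  case (2 r)
  then show ?thesis
    using assms(2) by (simp add: Lp1_ereal enn_powr_indicator enn_powr_ennreal inv_exp_def)
qed

lemma Youngs_inequality_tangent:
  fixes u l r :: real
  assumes "0 \<le> u" and "0 < l" and "1 < r"
  shows "u \<le> u powr r / (r * l powr (r - 1)) + l * (1 - 1 / r)"
proof -
  define q where "q = r / (r - 1)"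
  have q: "1 < q" "1 / r + 1 / q = 1"
    using assms(3) by (auto simp: q_def field_simps)
  have "u / l \<le> (u / l) powr r / r + 1 powr q / q"
    using Youngs_inequality[OF assms(3) q, of "u / l" 1] assms by simp
  then have "l * (u / l) \<le> l * ((u / l) powr r / r + (1 - 1 / r))"
    using q assms(2) by (intro mult_left_mono) auto
  moreover have "l * ((u / l) powr r / r) = u powr r / (r * l powr (r - 1))"
    using assms by (simp add: powr_divide powr_diff field_simps)
  ultimately show ?thesis
    using assms(2) by (simp add: distrib_left)
qed

lemma Youngs_tangent_optimum:
  fixes x L r :: real
  assumes "0 < x" and "0 < L" and "1 < r"
  defines "l \<equiv> (x / L) powr (1 / r)"
  shows "x / (r * l powr (r - 1)) + l * (1 - 1 / r) * L = L powr (1 - 1 / r) * x powr (1 / r)"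
proof -
  have l: "0 < l" "l powr r = x / L"
    using assms by (simp_all add: l_def powr_powr)
  then have "l * l powr (r - 1) = x / L"
    by (simp add: powr_mult_base)
  with l have "x / (r * l powr (r - 1)) = L * l / r"
    using assms(2,3) by (simp add: field_simps)
  then have "x / (r * l powr (r - 1)) + l * (1 - 1 / r) * L = L * l"
    using assms(3) by (simp add: field_simps)
  also have "\<dots> = L powr (1 - 1 / r) * x powr (1 / r)"
    using assms(1,2) by (simp add: l_def powr_divide powr_diff)
  finally show ?thesis .
qed

lemma nn_integral_interval_Holder:
  fixes h :: "real \<Rightarrow> ennreal"
  assumes [measurable]: "h \<in> borel_measurable lborel"
    and supp: "\<And>t. t \<notin> {a..b} \<Longrightarrow> h t = 0" and "a < b" and r: "1 < r"
  shows "(\<integral>\<^sup>+t. h t \<partial>lborel)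
    \<le> ennreal ((b - a) powr (1 - 1 / r)) * enn_powr (\<integral>\<^sup>+t. enn_powr (h t) r \<partial>lborel) (1 / r)"
proof -
  define L where "L = b - a"
  define X where "X = (\<integral>\<^sup>+t. enn_powr (h t) r \<partial>lborel)"
  have L: "0 < L"
    using \<open>a < b\<close> by (simp add: L_def)
  consider "X = top" | "X = 0" | x where "X = ennreal x" "0 < x"
    by (metis ennreal_cases ennreal_less_zero_iff not_gr_zero)
  then show ?thesis
  proof cases
    case 1
    then show ?thesis
      using L r by (simp add: X_def[symmetric] L_def[symmetric] ennreal_mult_top)
  next
    case 2
    then have "AE t in lborel. enn_powr (h t) r = 0"
      by (simp add: X_def nn_integral_0_iff_AE)
    then have "AE t in lborel. h t = 0"
      using r by (auto simp: enn_powr_eq_0_iff elim: eventually_mono)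
    then have "(\<integral>\<^sup>+t. h t \<partial>lborel) = 0"
      by (simp add: nn_integral_0_iff_AE)
    then show ?thesis
      by simp
  next
    case (3 x)
    \<comment> \<open>The tangent-line bound of Young's inequality, at the point where it is sharp.\<close>
    define l where "l = (x / L) powr (1 / r)"
    define \<alpha> where "\<alpha> = 1 / (r * l powr (r - 1))"
    define \<beta> where "\<beta> = l * (1 - 1 / r)"
    have l: "0 < l" "l powr r = x / L"
      using 3 L r by (auto simp: l_def powr_powr)
    have \<alpha>\<beta>: "0 < \<alpha>" "0 \<le> \<beta>"
      using l r by (auto simp: \<alpha>_def \<beta>_def)
    have pointwise: "h t \<le> ennreal \<alpha> * enn_powr (h t) r + ennreal \<beta> * indicator {a..b} t" for t
    proof (cases "h t")
      case (real u)
      then have "u \<le> \<alpha> * u powr r + \<beta>"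
        using Youngs_inequality_tangent[of u l r] l r by (simp add: \<alpha>_def \<beta>_def)
      then show ?thesis
        using real \<alpha>\<beta> supp[of t]
        by (cases "t \<in> {a..b}") (auto simp: enn_powr_ennreal simp flip: ennreal_plus ennreal_mult)
    qed (use \<alpha>\<beta> in \<open>simp add: ennreal_mult_top\<close>)
    have optimum: "\<alpha> * x + \<beta> * L = L powr (1 - 1 / r) * x powr (1 / r)"
      using Youngs_tangent_optimum[OF \<open>0 < x\<close> L r] by (simp add: \<alpha>_def \<beta>_def l_def)
    have "(\<integral>\<^sup>+t. h t \<partial>lborel)
        \<le> (\<integral>\<^sup>+t. ennreal \<alpha> * enn_powr (h t) r + ennreal \<beta> * indicator {a..b} t \<partial>lborel)"
      using pointwise by (intro nn_integral_mono)
    also have "\<dots> = ennreal (\<alpha> * x + \<beta> * L)"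
      using 3 \<alpha>\<beta> L \<open>a < b\<close>
      by (simp add: nn_integral_add nn_integral_cmult X_def[symmetric] L_def ennreal_mult)
    also have "\<dots> = ennreal (L powr (1 - 1 / r)) * enn_powr X (1 / r)"
      using 3 by (simp add: optimum enn_powr_ennreal ennreal_mult)
    finally show ?thesis
      by (simp add: X_def L_def)
  qed
qed

lemma nn_integral_le_Lp1_interval:
  fixes g :: "real \<Rightarrow> ennreal"
  assumes "1 \<le> p" and supp: "\<And>t. t \<notin> {a..b} \<Longrightarrow> g t = 0" and "a < b"
  shows "(\<integral>\<^sup>+t. g t \<partial>lborel) \<le> ennreal ((b - a) powr (1 - inv_exp p)) * Lp1 p g"
  using assms(1)
proof (cases rule: ereal_ge_1_cases)
  case 1
  have "AE t in lborel. g t \<le> Lp1 p g * indicator {a..b} t"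
    using AE_le_Inf_AE_upper_bounds[of g lborel]
    by eventually_elim (use 1 supp in \<open>auto simp: Lp1_infinity indicator_def\<close>)
  then have "(\<integral>\<^sup>+t. g t \<partial>lborel) \<le> (\<integral>\<^sup>+t. Lp1 p g * indicator {a..b} t \<partial>lborel)"
    by (rule nn_integral_mono_AE)
  then show ?thesis
    using 1 \<open>a < b\<close> by (simp add: nn_integral_cmult_indicator inv_exp_def mult.commute)
next
  case (2 r)
  show ?thesis
  proof (cases "r = 1")
    case False
    obtain h where h: "h \<in> borel_measurable lborel" "\<And>t. h t \<le> g t"
        "integral\<^sup>N lborel h = integral\<^sup>N lborel g"
      using nn_integral_measurable_minorant[of lborel g] by metis
    have "h t = 0" if "t \<notin> {a..b}" for t
      using h(2)[of t] supp[OF that] by simp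
    then have "(\<integral>\<^sup>+t. g t \<partial>lborel)
        \<le> ennreal ((b - a) powr (1 - 1 / r)) * enn_powr (\<integral>\<^sup>+t. enn_powr (h t) r \<partial>lborel) (1 / r)"
      using nn_integral_interval_Holder[OF h(1) _ \<open>a < b\<close>, of r] h(3) 2 False by simp
    also have "\<dots> \<le> ennreal ((b - a) powr (1 - 1 / r)) * enn_powr (\<integral>\<^sup>+t. enn_powr (g t) r \<partial>lborel) (1 / r)"
      using 2 h(2) by (intro mult_left_mono enn_powr_mono nn_integral_mono) auto
    finally show ?thesis
      using 2 by (simp add: inv_exp_def Lp1_ereal)
  qed (use 2 \<open>a < b\<close> in \<open>simp add: inv_exp_def Lp1_ereal\<close>)
qed

section \<open>Mixed norms\<close>

lemma mixnorm_aux_mono: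
  assumes "\<forall>p\<in>set ps. 1 \<le> p" and "\<And>x. g x \<le> h x"
  shows "mixnorm_aux k ps g z \<le> mixnorm_aux k ps h z"
  using assms
proof (induction ps arbitrary: k g h)
  case (Cons p ps)
  show ?case
    using Cons.prems by (simp del: mixnorm_aux.simps(1)) (intro Cons.IH Lp1_mono, auto)
qed simp

lemma mixnorm_aux_cmult:
  assumes "\<forall>p\<in>set ps. 1 \<le> p" and "c < top"
  shows "mixnorm_aux k ps (\<lambda>x. c * g x) z = c * mixnorm_aux k ps g z"
  using assms
proof (induction ps arbitrary: k g)
  case (Cons p ps)
  have "mixnorm_aux k (p # ps) (\<lambda>x. c * g x) z
      = mixnorm_aux (Suc k) ps (\<lambda>x. c * Lp1 p (\<lambda>t. g (x(k := t)))) z"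
    using Cons.prems by (simp add: Lp1_cmult)
  also have "\<dots> = c * mixnorm_aux k (p # ps) g z"
    using Cons.prems by (simp add: Cons.IH)
  finally show ?case .
qed simp

lemma mixnorm_aux_zero: "\<forall>p\<in>set ps. 1 \<le> p \<Longrightarrow> mixnorm_aux k ps (\<lambda>_. 0) z = 0"
  using mixnorm_aux_cmult[of ps 0 k "\<lambda>_. 0" z] by simp

lemma fun_upd_in_Pi_insert_iff:
  "k \<notin> I \<Longrightarrow> x(k := t) \<in> Pi (insert k I) A \<longleftrightarrow> t \<in> A k \<and> x \<in> Pi I A"
  by (auto simp: Pi_def)

lemma indicator_Pi_insert_fun_upd:
  "k \<notin> I \<Longrightarrow> (indicator (Pi (insert k I) A) (x(k := t)) :: 'a::semiring_1)
     = indicator (Pi I A) x * indicator (A k) t"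
  by (simp add: indicator_def fun_upd_in_Pi_insert_iff)

lemma mixnorm_aux_le_box:
  assumes "\<forall>p\<in>set ps. 1 \<le> p" and "\<forall>i\<in>{k..<k + length ps}. a i < b i"
    and "\<And>x. g x \<le> c * indicator (Pi {k..<k + length ps} (\<lambda>i. {a i..b i})) x" and "c < top"
  shows "mixnorm_aux k ps g z \<le> c * ennreal (\<Prod>j<length ps. (b (k + j) - a (k + j)) powr inv_exp (ps ! j))"
  using assms
proof (induction ps arbitrary: k g c)
  case Nil
  then show ?case
    using Nil.prems(3)[of z] by simp
next
  case (Cons p ps)
  let ?J = "{Suc k..<Suc k + length ps}"
  let ?box = "\<lambda>i. {a i..b i}"
  let ?L = "(b k - a k) powr inv_exp p"
  have p: "1 \<le> p"
    using Cons.prems by simp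
  have split: "{k..<k + length (p # ps)} = insert k ?J"
    by auto
  have bound: "Lp1 p (\<lambda>t. g (x(k := t))) \<le> (c * ennreal ?L) * indicator (Pi ?J ?box) x" for x
  proof -
    have J: "k \<notin> ?J"
      by simp
    have "g (x(k := t)) \<le> (c * indicator (Pi ?J ?box) x) * indicator {a k..b k} t" for t
      using Cons.prems(3)[of "x(k := t)"]
      unfolding split indicator_Pi_insert_fun_upd[OF J] by (simp only: mult.assoc)
    then have "Lp1 p (\<lambda>t. g (x(k := t))) \<le> Lp1 p (\<lambda>t. (c * indicator (Pi ?J ?box) x) * indicator {a k..b k} t)"
      using p by (intro Lp1_mono)
    also have "\<dots> = (c * indicator (Pi ?J ?box) x) * Lp1 p (indicator {a k..b k})"
      using p Cons.prems(4) by (intro Lp1_cmult) (auto simp: indicator_def)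
    also have "\<dots> \<le> (c * indicator (Pi ?J ?box) x) * ennreal ?L"
      using Cons.prems(2) p by (intro mult_left_mono Lp1_indicator_interval_le) auto
    finally show ?thesis
      by (simp add: mult_ac)
  qed
  have "mixnorm_aux (Suc k) ps (\<lambda>x. Lp1 p (\<lambda>t. g (x(k := t)))) z
      \<le> (c * ennreal ?L) * ennreal (\<Prod>j<length ps. (b (Suc k + j) - a (Suc k + j)) powr inv_exp (ps ! j))"
  proof (rule Cons.IH)
    show "\<forall>p\<in>set ps. 1 \<le> p" "\<forall>i\<in>?J. a i < b i" "c * ennreal ?L < top"
      using Cons.prems by (auto simp: ennreal_mult_less_top)
  qed (rule bound)
  also have "\<dots> = c * ennreal (\<Prod>j<length (p # ps). (b (k + j) - a (k + j)) powr inv_exp ((p # ps) ! j))"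
    by (simp add: prod.lessThan_Suc_shift ennreal_mult' mult.assoc del: prod.lessThan_Suc)
  finally show ?case
    by simp
qed

lemma mixnorm_aux_Holder:
  assumes "\<forall>p\<in>set ps. 1 \<le> p" and "\<forall>i\<in>{k..<k + length ps}. a i < b i"
    and "\<And>x. x \<notin> Pi {k..<k + length ps} (\<lambda>i. {a i..b i}) \<Longrightarrow> g x = 0"
  shows "mixnorm_aux k (replicate (length ps) 1) g z
    \<le> ennreal (\<Prod>j<length ps. (b (k + j) - a (k + j)) powr (1 - inv_exp (ps ! j))) * mixnorm_aux k ps g z"
  using assms
proof (induction ps arbitrary: k g)
  case (Cons p ps)
  let ?J = "{Suc k..<Suc k + length ps}"
  let ?box = "\<lambda>i. {a i..b i}"
  let ?c = "(b k - a k) powr (1 - inv_exp p)"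
  let ?h = "\<lambda>x. Lp1 p (\<lambda>t. g (x(k := t)))"
  let ?ones = "replicate (length ps) (1::ereal)"
  have p: "1 \<le> p"
    using Cons.prems by simp
  have split: "{k..<k + length (p # ps)} = insert k ?J"
    by auto
  have outside: "g (x(k := t)) = 0" if "t \<notin> {a k..b k} \<or> x \<notin> Pi ?J ?box" for x t
  proof (rule Cons.prems(3))
    have "k \<notin> ?J"
      by simp
    then show "x(k := t) \<notin> Pi {k..<k + length (p # ps)} ?box"
      using that unfolding split fun_upd_in_Pi_insert_iff[OF \<open>k \<notin> ?J\<close>] by blast
  qed
  have "mixnorm_aux k (1 # ?ones) g z = mixnorm_aux (Suc k) ?ones (\<lambda>x. Lp1 1 (\<lambda>t. g (x(k := t)))) z"
    by simp
  also have "\<dots> \<le> mixnorm_aux (Suc k) ?ones (\<lambda>x. ennreal ?c * ?h x) z"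
    using p Cons.prems(2) outside
    by (intro mixnorm_aux_mono) (auto simp: Lp1_one intro!: nn_integral_le_Lp1_interval)
  also have "\<dots> = ennreal ?c * mixnorm_aux (Suc k) ?ones ?h z"
    by (intro mixnorm_aux_cmult) auto
  also have "\<dots> \<le> ennreal ?c * (ennreal (\<Prod>j<length ps. (b (Suc k + j) - a (Suc k + j))
      powr (1 - inv_exp (ps ! j))) * mixnorm_aux (Suc k) ps ?h z)"
  proof (intro mult_left_mono Cons.IH)
    show "\<forall>p\<in>set ps. 1 \<le> p" "\<forall>i\<in>?J. a i < b i"
      using Cons.prems by auto
    show "?h x = 0" if "x \<notin> Pi ?J ?box" for x
    proof -
      have "(\<lambda>t. g (x(k := t))) = (\<lambda>_. 0)"
        using outside that by blast
      then show ?thesis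
        using Lp1_zero[OF p] by simp
    qed
  qed simp
  also have "\<dots> = ennreal (\<Prod>j<length (p # ps). (b (k + j) - a (k + j)) powr (1 - inv_exp ((p # ps) ! j)))
      * mixnorm_aux k (p # ps) g z"
    by (simp add: prod.lessThan_Suc_shift ennreal_mult' mult.assoc del: prod.lessThan_Suc)
  finally show ?case
    by simp
qed simp

interpretation lborel_product: product_sigma_finite "\<lambda>_::nat. lborel"
  by standard

lemma override_on_fun_upd:
  "k \<notin> J \<Longrightarrow> (override_on z w J)(k := t) = override_on z (w(k := t)) (insert k J)"
  by (auto simp: override_on_def fun_eq_iff)

lemma mixnorm_aux_replicate_1:
  fixes g :: "(nat \<Rightarrow> real) \<Rightarrow> ennreal"
  assumes "(\<lambda>w. g (override_on z w {k..<k + m})) \<in> borel_measurable (PiM {k..<k + m} (\<lambda>_. lborel))"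
  shows "mixnorm_aux k (replicate m 1) g z
    = (\<integral>\<^sup>+w. g (override_on z w {k..<k + m}) \<partial>PiM {k..<k + m} (\<lambda>_. lborel))"
  using assms
proof (induction m arbitrary: k g)
  case 0
  then show ?case
    by (simp add: PiM_empty nn_integral_count_space_finite)
next
  case (Suc m)
  define J where "J = {Suc k..<Suc k + m}"
  have J: "{k..<k + Suc m} = insert k J" "k \<notin> J" "finite J"
    by (auto simp: J_def)
  define F where "F w = g (override_on z w (insert k J))" for w
  have [measurable]: "F \<in> borel_measurable (PiM (insert k J) (\<lambda>_. lborel))"
    using Suc.prems unfolding F_def J(1) .
  have slice: "Lp1 1 (\<lambda>t. g ((override_on z w J)(k := t))) = (\<integral>\<^sup>+t. F (w(k := t)) \<partial>lborel)" for w
    by (simp add: Lp1_one override_on_fun_upd[OF J(2)] F_def)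
  have "(\<lambda>(w, t). F (w(k := t))) \<in> borel_measurable (PiM J (\<lambda>_. lborel) \<Otimes>\<^sub>M lborel)"
    by measurable
  then have "(\<lambda>w. \<integral>\<^sup>+t. F (w(k := t)) \<partial>lborel) \<in> borel_measurable (PiM J (\<lambda>_. lborel))"
    by (rule lborel.borel_measurable_nn_integral)
  then have "(\<lambda>w. Lp1 1 (\<lambda>t. g ((override_on z w J)(k := t)))) \<in> borel_measurable (PiM J (\<lambda>_. lborel))"
    unfolding slice .
  then have "mixnorm_aux (Suc k) (replicate m 1) (\<lambda>x. Lp1 1 (\<lambda>t. g (x(k := t)))) z
      = (\<integral>\<^sup>+w. Lp1 1 (\<lambda>t. g ((override_on z w J)(k := t))) \<partial>PiM J (\<lambda>_. lborel))"
    unfolding J_def by (rule Suc.IH)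
  then have "mixnorm_aux k (replicate (Suc m) 1) g z
      = (\<integral>\<^sup>+w. \<integral>\<^sup>+t. F (w(k := t)) \<partial>lborel \<partial>PiM J (\<lambda>_. lborel))"
    by (simp only: slice replicate_Suc mixnorm_aux.simps)
  also have "\<dots> = (\<integral>\<^sup>+w. F w \<partial>PiM (insert k J) (\<lambda>_. lborel))"
    using J by (intro lborel_product.product_nn_integral_insert[symmetric]) auto
  finally show ?case
    unfolding F_def J(1) .
qed

section \<open>Cubes and balls in R^n\<close>

definition cube :: "nat \<Rightarrow> (nat \<Rightarrow> real) \<Rightarrow> real \<Rightarrow> (nat \<Rightarrow> real) set" where
  "cube n y d = PiE {..<n} (\<lambda>i. {y i - d..y i + d})"

definition Rdist :: "nat \<Rightarrow> (nat \<Rightarrow> real) \<Rightarrow> (nat \<Rightarrow> real) \<Rightarrow> real" where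
  "Rdist n x y = sqrt (\<Sum>i<n. (x i - y i)\<^sup>2)"

lemma space_Rn: "space (Rn n) = PiE {..<n} (\<lambda>_. UNIV)"
  by (simp add: Rn_def space_PiM)

interpretation Rn: sigma_finite_measure "Rn n"
  unfolding Rn_def by (rule lborel_product.sigma_finite) auto

lemma cube_in_sets [measurable]: "cube n y d \<in> sets (Rn n)"
  unfolding cube_def Rn_def by (rule sets_PiM_I_finite) auto

lemma cube_subset_space: "cube n y d \<subseteq> space (Rn n)"
  by (auto simp: cube_def space_Rn)

lemma cube_subset_Pi: "cube n y d \<subseteq> Pi {..<n} (\<lambda>i. {y i - d..y i + d})"
  by (auto simp: cube_def)

lemma emeasure_cube: "0 \<le> d \<Longrightarrow> emeasure (Rn n) (cube n y d) = ennreal ((2 * d) ^ n)"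
  unfolding cube_def Rn_def
  by (subst lborel_product.emeasure_PiM) (auto simp: prod_ennreal ennreal_power)

lemma Rball_eq: "Rball n y r = {x \<in> space (Rn n). Rdist n x y < r}"
  by (simp add: Rball_def Rdist_def)

lemma measurable_Rdist [measurable]: "(\<lambda>x. Rdist n x y) \<in> borel_measurable (Rn n)"
  unfolding Rdist_def Rn_def by measurable

lemma Rball_in_sets [measurable]: "Rball n y r \<in> sets (Rn n)"
  unfolding Rball_eq by measurable

lemma Rdist_commute: "Rdist n x y = Rdist n y x"
  by (simp add: Rdist_def power2_commute)

lemma abs_diff_le_Rdist:
  assumes "i < n"
  shows "\<bar>x i - y i\<bar> \<le> Rdist n x y"
proof -
  have "(x i - y i)\<^sup>2 \<le> (\<Sum>j<n. (x j - y j)\<^sup>2)"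
    using assms by (intro member_le_sum) auto
  then show ?thesis
    unfolding Rdist_def by (metis real_sqrt_abs real_sqrt_le_mono)
qed

lemma Rdist_le:
  assumes "\<And>i. i < n \<Longrightarrow> \<bar>x i - y i\<bar> \<le> d"
  shows "Rdist n x y \<le> real n * d"
proof (cases "n = 0")
  case False
  then have d: "0 \<le> d"
    using assms[of 0] by simp
  have "(\<Sum>i<n. (x i - y i)\<^sup>2) \<le> (\<Sum>i<n. d\<^sup>2)"
    using assms by (intro sum_mono) (metis abs_ge_zero lessThan_iff power2_abs power_mono)
  also have "\<dots> = real n * 1 * d\<^sup>2"
    by simp
  also have "\<dots> \<le> real n * real n * d\<^sup>2"
    using False by (intro mult_right_mono mult_left_mono) auto
  also have "\<dots> = (real n * d)\<^sup>2"
    by (simp add: power2_eq_square)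
  finally have "sqrt (\<Sum>i<n. (x i - y i)\<^sup>2) \<le> sqrt ((real n * d)\<^sup>2)"
    by (rule real_sqrt_le_mono)
  then show ?thesis
    unfolding Rdist_def using d by simp
qed (simp add: Rdist_def)

lemma mem_cube_iff: "x \<in> cube n z R \<longleftrightarrow> x \<in> space (Rn n) \<and> (\<forall>i<n. \<bar>x i - z i\<bar> \<le> R)"
proof -
  have "x i \<in> {z i - R..z i + R} \<longleftrightarrow> \<bar>x i - z i\<bar> \<le> R" for i
    by (auto simp: abs_le_iff)
  then show ?thesis
    by (auto simp: cube_def space_Rn PiE_iff)
qed

lemma Rball_subset_cube: "Rball n y r \<subseteq> cube n y r"
proof
  fix x
  assume x: "x \<in> Rball n y r"
  have "\<bar>x i - y i\<bar> \<le> r" if "i < n" for i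
    using abs_diff_le_Rdist[OF that, of x y] x by (simp add: Rball_eq)
  then show "x \<in> cube n y r"
    using x by (simp add: mem_cube_iff Rball_eq)
qed

lemma Rball_subset_cube_of_mem:
  assumes "x \<in> cube n z R" and "R + r \<le> R'"
  shows "Rball n x r \<subseteq> cube n z R'"
proof
  fix y
  assume y: "y \<in> Rball n x r"
  have "\<bar>y i - z i\<bar> \<le> R'" if "i < n" for i
  proof -
    have "\<bar>y i - x i\<bar> < r"
      using y abs_diff_le_Rdist[OF that, of y x] by (simp add: Rball_eq)
    moreover have "\<bar>x i - z i\<bar> \<le> R"
      using assms(1) that by (simp add: mem_cube_iff)
    ultimately show ?thesis
      using assms(2) by linarith
  qed
  then show "y \<in> cube n z R'"
    using y by (simp add: mem_cube_iff Rball_eq)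
qed

lemma cube_subset_Rball:
  assumes "\<And>i. i < n \<Longrightarrow> \<bar>y i - z i\<bar> \<le> \<rho>" and "real n * (R + \<rho>) < r"
  shows "cube n z R \<subseteq> Rball n y r"
proof
  fix x
  assume x: "x \<in> cube n z R"
  have "\<bar>x i - y i\<bar> \<le> R + \<rho>" if "i < n" for i
  proof -
    have "\<bar>x i - z i\<bar> \<le> R"
      using x that by (simp add: mem_cube_iff)
    with assms(1)[OF that] show ?thesis
      by linarith
  qed
  then have "Rdist n x y < r"
    using Rdist_le assms(2) by (meson le_less_trans)
  then show "x \<in> Rball n y r"
    using x by (simp add: Rball_eq mem_cube_iff)
qed

lemma measure_Rball_bounds:
  assumes "1 \<le> n" and "0 < r"
  shows "emeasure (Rn n) (Rball n y r) < top"
    and "(r / n) ^ n \<le> measure (Rn n) (Rball n y r)"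
    and "measure (Rn n) (Rball n y r) \<le> (2 * r) ^ n"
proof -
  have "emeasure (Rn n) (Rball n y r) \<le> emeasure (Rn n) (cube n y r)"
    by (rule emeasure_mono[OF Rball_subset_cube cube_in_sets])
  then have upper: "emeasure (Rn n) (Rball n y r) \<le> ennreal ((2 * r) ^ n)"
    using assms by (simp add: emeasure_cube)
  then show finite: "emeasure (Rn n) (Rball n y r) < top"
    using ennreal_less_top order_le_less_trans by blast
  then show "measure (Rn n) (Rball n y r) \<le> (2 * r) ^ n"
    using upper assms(2) by (simp add: measure_def enn2real_leI)
  have "cube n y (r / (2 * n)) \<subseteq> Rball n y r"
    using assms by (intro cube_subset_Rball[where \<rho> = 0]) (auto simp: field_simps)
  then have "emeasure (Rn n) (cube n y (r / (2 * n))) \<le> emeasure (Rn n) (Rball n y r)"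
    by (rule emeasure_mono[OF _ Rball_in_sets])
  then have "ennreal ((r / n) ^ n) \<le> emeasure (Rn n) (Rball n y r)"
    using assms by (simp add: emeasure_cube)
  from enn2real_mono[OF this finite] show "(r / n) ^ n \<le> measure (Rn n) (Rball n y r)"
    using assms(2) by (simp add: measure_def)
qed

lemma powr_between_bounds:
  fixes x l u e :: real
  assumes "0 < l" and "l \<le> x" and "x \<le> u"
  shows "min (l powr e) (u powr e) \<le> x powr e \<and> x powr e \<le> max (l powr e) (u powr e)"
proof (cases "0 \<le> e")
  case True
  then have "l powr e \<le> x powr e" "x powr e \<le> u powr e"
    using assms by (auto intro: powr_mono2)
  then show ?thesis
    by (simp add: min_le_iff_disj le_max_iff_disj)
next
  case False
  then have "u powr e \<le> x powr e" "x powr e \<le> l powr e"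
    using assms by (auto intro: powr_mono2')
  then show ?thesis
    by (simp add: min_le_iff_disj le_max_iff_disj)
qed

lemma measure_Rball_powr_bounds:
  assumes "1 \<le> n" and "0 < r"
  shows "min (real n powr - (n * e)) (2 powr (n * e)) * r powr (n * e) \<le> measure (Rn n) (Rball n y r) powr e"
    and "measure (Rn n) (Rball n y r) powr e \<le> max (real n powr - (n * e)) (2 powr (n * e)) * r powr (n * e)"
proof -
  have "((r / n) ^ n) powr e = (r / n) powr (n * e)"
    using assms by (simp add: powr_realpow[symmetric] powr_powr)
  also have "\<dots> = r powr (n * e) / n powr (n * e)"
    using assms by (simp add: powr_divide)
  finally have lower: "((r / n) ^ n) powr e = real n powr - (n * e) * r powr (n * e)"
    by (simp add: powr_minus divide_inverse mult.commute)
  have upper: "((2 * r) ^ n) powr e = 2 powr (n * e) * r powr (n * e)"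
    using assms by (simp add: powr_realpow[symmetric] powr_powr powr_mult)
  have "0 < (r / n) ^ n"
    using assms by simp
  from powr_between_bounds[OF this measure_Rball_bounds(2,3)[OF assms], of e]
  have bounds: "min (real n powr - (n * e)) (2 powr (n * e)) * r powr (n * e) \<le> measure (Rn n) (Rball n y r) powr e
      \<and> measure (Rn n) (Rball n y r) powr e \<le> max (real n powr - (n * e)) (2 powr (n * e)) * r powr (n * e)"
    unfolding lower upper by (simp add: min_mult_distrib_right max_mult_distrib_right)
  then show "min (real n powr - (n * e)) (2 powr (n * e)) * r powr (n * e) \<le> measure (Rn n) (Rball n y r) powr e"
    by (rule conjunct1)
  from bounds show "measure (Rn n) (Rball n y r) powr e \<le> max (real n powr - (n * e)) (2 powr (n * e)) * r powr (n * e)"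
    by (rule conjunct2)
qed

lemma prod_powr_nth_eq_powr_sum_list:
  fixes x :: real
  assumes "0 < x" and "length ps = n"
  shows "(\<Prod>j<n. x powr f (ps ! j)) = x powr (\<Sum>p\<leftarrow>ps. f p)"
  using assms by (simp add: powr_sum sum_list_sum_nth atLeast0LessThan)

lemma nn_integral_Rn_eq_mixnorm_enn_replicate_1:
  assumes [measurable]: "g \<in> borel_measurable (Rn n)"
  shows "(\<integral>\<^sup>+x. g x \<partial>Rn n) = mixnorm_enn (replicate n 1) g"
proof -
  have override: "override_on (\<lambda>_. undefined) w {0..<n} = w" if "w \<in> space (Rn n)" for w
    using that by (auto simp: override_on_def space_Rn PiE_def extensional_def fun_eq_iff)
  have Rn: "PiM {0..<n} (\<lambda>_. lborel) = Rn n"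
    by (simp add: Rn_def atLeast0LessThan)
  have "(\<lambda>w. g (override_on (\<lambda>_. undefined) w {0..<0 + n})) \<in> borel_measurable (PiM {0..<0 + n} (\<lambda>_. lborel))"
    unfolding add_0 Rn using override by (subst measurable_cong) auto
  then have "mixnorm_enn (replicate n 1) g
      = (\<integral>\<^sup>+w. g (override_on (\<lambda>_. undefined) w {0..<0 + n}) \<partial>PiM {0..<0 + n} (\<lambda>_. lborel))"
    unfolding mixnorm_enn_def by (rule mixnorm_aux_replicate_1)
  also have "\<dots> = (\<integral>\<^sup>+x. g x \<partial>Rn n)"
    unfolding add_0 Rn using override by (simp cong: nn_integral_cong)
  finally show ?thesis
    by simp
qed

lemma mixnorm_enn_le_box:
  assumes "\<forall>p\<in>set ps. 1 \<le> p" and "length ps = n" and "0 < d"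
    and "\<And>x. g x \<le> c * indicator (Pi {..<n} (\<lambda>i. {y i - d..y i + d})) x" and "c < top"
  shows "mixnorm_enn ps g \<le> c * ennreal ((2 * d) powr (\<Sum>p\<leftarrow>ps. inv_exp p))"
proof -
  have "mixnorm_enn ps g \<le> c * ennreal (\<Prod>j<length ps. (y (0 + j) + d - (y (0 + j) - d)) powr inv_exp (ps ! j))"
    unfolding mixnorm_enn_def using assms by (intro mixnorm_aux_le_box) (auto simp: atLeast0LessThan)
  then show ?thesis
    using assms(2,3) by (simp add: prod_powr_nth_eq_powr_sum_list)
qed

lemma nn_integral_le_mixnorm_enn_cube:
  assumes "\<forall>p\<in>set ps. 1 \<le> p" and "length ps = n" and "0 < d"
    and "g \<in> borel_measurable (Rn n)" and "\<And>x. x \<notin> cube n y d \<Longrightarrow> g x = 0"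
  shows "(\<integral>\<^sup>+x. g x \<partial>Rn n) \<le> ennreal ((2 * d) powr (real n - (\<Sum>p\<leftarrow>ps. inv_exp p))) * mixnorm_enn ps g"
proof -
  have "x \<notin> Pi {0..<0 + length ps} (\<lambda>i. {y i - d..y i + d}) \<Longrightarrow> g x = 0" for x
    using assms(2,5) cube_subset_Pi[of n y d] by (auto simp: atLeast0LessThan)
  then have "mixnorm_aux 0 (replicate (length ps) 1) g (\<lambda>_. undefined)
      \<le> ennreal (\<Prod>j<length ps. (y (0 + j) + d - (y (0 + j) - d)) powr (1 - inv_exp (ps ! j)))
        * mixnorm_aux 0 ps g (\<lambda>_. undefined)"
    using assms by (intro mixnorm_aux_Holder) auto
  moreover have "(\<Sum>p\<leftarrow>ps. 1 - inv_exp p) = real n - (\<Sum>p\<leftarrow>ps. inv_exp p)"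
    using assms(2) by (simp add: sum_list_subtractf sum_list_triv)
  ultimately show ?thesis
    using assms prod_powr_nth_eq_powr_sum_list[of "2 * d" ps n "\<lambda>p. 1 - inv_exp p"]
    by (simp add: nn_integral_Rn_eq_mixnorm_enn_replicate_1 mixnorm_enn_def)
qed

lemma mixnorm_enn_indicator_cube_ge:
  assumes "\<forall>p\<in>set ps. 1 \<le> p" and "length ps = n" and "0 < d"
  shows "ennreal ((2 * d) powr (\<Sum>p\<leftarrow>ps. inv_exp p)) \<le> mixnorm_enn ps (indicator (cube n y d))"
proof -
  let ?P = "\<Sum>p\<leftarrow>ps. inv_exp p"
  have "(2 * d) powr (n - ?P) * (2 * d) powr ?P = (2 * d) ^ n"
    using assms(3) by (simp add: powr_realpow flip: powr_add)
  then have "ennreal ((2 * d) powr (n - ?P)) * ennreal ((2 * d) powr ?P) = emeasure (Rn n) (cube n y d)"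
    using assms(3) by (simp add: emeasure_cube flip: ennreal_mult)
  also have "\<dots> \<le> ennreal ((2 * d) powr (n - ?P)) * mixnorm_enn ps (indicator (cube n y d))"
    using nn_integral_le_mixnorm_enn_cube[OF assms, where g = "indicator (cube n y d)" and y = y] by simp
  finally show ?thesis
    using assms(3) by (simp add: ennreal_mult_le_mult_iff)
qed

definition amalgam_at_radius ::
    "nat \<Rightarrow> ereal list \<Rightarrow> ereal list \<Rightarrow> real \<Rightarrow> ((nat \<Rightarrow> real) \<Rightarrow> real) \<Rightarrow> real \<Rightarrow> ennreal" where
  "amalgam_at_radius n ps ss e f r =
     mixnorm_enn ss (\<lambda>y. ennreal (measure (Rn n) (Rball n y r) powr e)
                        * mixnorm ps (\<lambda>x. indicator (Rball n y r) x * f x))"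

lemma amalgam_norm_eq_SUP:
  "amalgam_norm ps ss \<alpha> f = (SUP r\<in>{0<..}. amalgam_at_radius (length ps) ps ss
     (inv_exp \<alpha> - (\<Sum>p\<leftarrow>ps. inv_exp p) / real (length ps) - (\<Sum>s\<leftarrow>ss. inv_exp s) / real (length ps)) f r)"
  by (simp add: amalgam_norm_def amalgam_at_radius_def Let_def)

lemma indicator_in_L1loc:
  assumes "A \<in> sets (Rn n)" and "1 \<le> n"
  shows "(indicator A :: _ \<Rightarrow> real) \<in> L1loc n"
  unfolding L1loc_def
proof safe
  show "(indicator A :: _ \<Rightarrow> real) \<in> borel_measurable (Rn n)"
    using assms(1) by simp
  fix y and r :: real
  assume "0 < r"
  have "emeasure (Rn n) (Rball n y r \<inter> A) \<le> emeasure (Rn n) (Rball n y r)"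
    by (intro emeasure_mono) auto
  then have "emeasure (Rn n) (Rball n y r \<inter> A) < top"
    using measure_Rball_bounds(1)[OF assms(2) \<open>0 < r\<close>] by (simp add: order_le_less_trans)
  then have "integrable (Rn n) (indicator (Rball n y r \<inter> A) :: _ \<Rightarrow> real)"
    using assms(1) by (simp add: Int_absorb2 sets.sets_into_space)
  then show "set_integrable (Rn n) (Rball n y r) (indicator A :: _ \<Rightarrow> real)"
    by (simp add: set_integrable_def indicator_inter_arith[symmetric])
qed

section \<open>Sufficiency\<close>

lemma powr_profile_bounded:
  fixes E P S :: real
  assumes "0 \<le> S" and "0 \<le> E + P" and "E + S \<le> 0"
  shows "\<exists>K. \<forall>r>0. r powr E * min 1 ((2 * r) powr P) * (1 + 2 * r) powr S \<le> K"
proof -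
  define K where "K = max (2 powr (P + S) * (1 / 2) powr (E + P)) (4 powr S * (1 / 2) powr (E + S))"
  have "r powr E * min 1 ((2 * r) powr P) * (1 + 2 * r) powr S \<le> K" if r: "0 < r" for r
  proof (cases "r \<le> 1 / 2")
    case True
    have "(1 + 2 * r) powr S \<le> 2 powr S"
      using True r assms(1) by (intro powr_mono2) auto
    then have "r powr E * min 1 ((2 * r) powr P) * (1 + 2 * r) powr S \<le> r powr E * (2 * r) powr P * 2 powr S"
      by (intro mult_mono mult_left_mono) auto
    also have "\<dots> = 2 powr (P + S) * r powr (E + P)"
      using r by (simp add: powr_mult powr_add)
    also have "\<dots> \<le> 2 powr (P + S) * (1 / 2) powr (E + P)"
      using True r assms(2) by (intro mult_left_mono powr_mono2) auto
    finally show ?thesis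
      by (simp add: K_def)
  next
    case False
    have "(1 + 2 * r) powr S \<le> (4 * r) powr S"
      using False assms(1) by (intro powr_mono2) auto
    then have "r powr E * min 1 ((2 * r) powr P) * (1 + 2 * r) powr S \<le> r powr E * 1 * (4 * r) powr S"
      by (intro mult_mono mult_left_mono) auto
    also have "\<dots> = 4 powr S * r powr (E + S)"
      using r by (simp add: powr_mult powr_add)
    also have "\<dots> \<le> 4 powr S * (1 / 2) powr (E + S)"
      using False assms(3) by (intro mult_left_mono powr_mono2') auto
    finally show ?thesis
      by (simp add: K_def)
  qed
  then show ?thesis
    by blast
qed

lemma mixnorm_Rball_unit_cube_le:
  assumes ps: "\<forall>p\<in>set ps. 1 \<le> p" "length ps = n" and "0 < r"
  shows "mixnorm ps (\<lambda>x. indicator (Rball n y r) x * indicator (cube n (\<lambda>_. 1 / 2) (1 / 2)) x)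
    \<le> ennreal (min 1 ((2 * r) powr (\<Sum>p\<leftarrow>ps. inv_exp p)))
      * indicator (Pi {..<n} (\<lambda>i. {1 / 2 - (1 + 2 * r) / 2..1 / 2 + (1 + 2 * r) / 2})) y"
    (is "_ \<le> _ * indicator ?Y y")
proof (cases "y \<in> ?Y")
  case True
  let ?Q = "cube n (\<lambda>_. 1 / 2) (1 / 2)"
  let ?g = "\<lambda>x. ennreal \<bar>indicator (Rball n y r) x * indicator ?Q x\<bar>"
  have "mixnorm_enn ps ?g \<le> 1 * ennreal ((2 * (1 / 2)) powr (\<Sum>p\<leftarrow>ps. inv_exp p))"
    by (rule mixnorm_enn_le_box[OF ps, where y = "\<lambda>_. 1 / 2"])
      (use cube_subset_Pi[of n "\<lambda>_. 1 / 2" "1 / 2"] in \<open>auto simp: indicator_def\<close>)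
  moreover have "Rball n y r \<subseteq> Pi {..<n} (\<lambda>i. {y i - r..y i + r})"
    using Rball_subset_cube cube_subset_Pi by blast
  then have "mixnorm_enn ps ?g \<le> 1 * ennreal ((2 * r) powr (\<Sum>p\<leftarrow>ps. inv_exp p))"
    by (intro mixnorm_enn_le_box[OF ps, where y = y]) (use \<open>0 < r\<close> in \<open>auto simp: indicator_def\<close>)
  ultimately show ?thesis
    using True by (simp add: mixnorm_def min_def)
next
  case False
  let ?Q = "cube n (\<lambda>_. 1 / 2) (1 / 2)"
  have "(\<lambda>x. indicator (Rball n y r) x * indicator ?Q x) = (\<lambda>_. 0 :: real)"
  proof (rule ext, rule ccontr)
    fix x
    assume "indicator (Rball n y r) x * indicator ?Q x \<noteq> (0::real)"
    then have x: "x \<in> Rball n y r" "x \<in> ?Q"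
      by (auto simp: indicator_def split: if_splits)
    have "y i \<in> {1 / 2 - (1 + 2 * r) / 2..1 / 2 + (1 + 2 * r) / 2}" if "i < n" for i
    proof -
      have "\<bar>x i - y i\<bar> < r"
        using abs_diff_le_Rdist[OF that, of x y] x(1) by (simp add: Rball_eq)
      moreover have "\<bar>x i - 1 / 2\<bar> \<le> 1 / 2"
        using x(2) that by (simp add: mem_cube_iff)
      ultimately show ?thesis
        unfolding atLeastAtMost_iff abs_less_iff abs_le_iff by (auto simp: field_simps)
    qed
    with False show False
      by auto
  qed
  then show ?thesis
    using mixnorm_aux_zero[of ps 0 "\<lambda>_. undefined"] ps(1) by (simp add: mixnorm_def mixnorm_enn_def)
qed

lemma amalgam_at_radius_unit_cube_le:
  assumes ps: "\<forall>p\<in>set ps. 1 \<le> p" "length ps = n" and ss: "\<forall>s\<in>set ss. 1 \<le> s" "length ss = n"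
    and "1 \<le> n" and "0 < r"
  defines "P \<equiv> \<Sum>p\<leftarrow>ps. inv_exp p" and "S \<equiv> \<Sum>s\<leftarrow>ss. inv_exp s"
  shows "amalgam_at_radius n ps ss e (indicator (cube n (\<lambda>_. 1 / 2) (1 / 2))) r
    \<le> ennreal (max (real n powr - (n * e)) (2 powr (n * e))
        * (r powr (n * e) * min 1 ((2 * r) powr P) * (1 + 2 * r) powr S))"
proof -
  let ?Q = "cube n (\<lambda>_. 1 / 2) (1 / 2)"
  let ?Y = "Pi {..<n} (\<lambda>i. {1 / 2 - (1 + 2 * r) / 2..1 / 2 + (1 + 2 * r) / 2})"
  define m where "m = min 1 ((2 * r) powr P)"
  define C where "C = max (real n powr - (n * e)) (2 powr (n * e)) * r powr (n * e)"
  have "0 \<le> m"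
    by (simp add: m_def)
  have "0 \<le> C"
    unfolding C_def by (intro mult_nonneg_nonneg) (auto simp: le_max_iff_disj)
  have inner: "mixnorm ps (\<lambda>x. indicator (Rball n y r) x * indicator ?Q x) \<le> ennreal m * indicator ?Y y" for y
    unfolding m_def P_def by (rule mixnorm_Rball_unit_cube_le[OF ps \<open>0 < r\<close>])
  have outer: "ennreal (measure (Rn n) (Rball n y r) powr e)
      * mixnorm ps (\<lambda>x. indicator (Rball n y r) x * indicator ?Q x) \<le> ennreal (C * m) * indicator ?Y y" for y
  proof -
    have "ennreal (measure (Rn n) (Rball n y r) powr e) \<le> ennreal C"
      by (rule ennreal_leI) (use measure_Rball_powr_bounds(2)[OF \<open>1 \<le> n\<close> \<open>0 < r\<close>, where e = e and y = y] in \<open>simp add: C_def\<close>)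
    then have "ennreal (measure (Rn n) (Rball n y r) powr e)
        * mixnorm ps (\<lambda>x. indicator (Rball n y r) x * indicator ?Q x) \<le> ennreal C * (ennreal m * indicator ?Y y)"
      using inner[of y] by (rule mult_mono) simp_all
    also have "\<dots> = ennreal (C * m) * indicator ?Y y"
      using \<open>0 \<le> C\<close> \<open>0 \<le> m\<close> by (simp add: ennreal_mult mult.assoc)
    finally show ?thesis .
  qed
  have two_r: "2 * ((1 + 2 * r) / 2) = 1 + 2 * r"
    by (simp add: field_simps)
  have product: "C * m * (1 + 2 * r) powr S
      = max (real n powr - (n * e)) (2 powr (n * e)) * (r powr (n * e) * min 1 ((2 * r) powr P) * (1 + 2 * r) powr S)"
    unfolding C_def m_def by (simp only: mult.assoc)
  have "amalgam_at_radius n ps ss e (indicator ?Q) r \<le> ennreal (C * m) * ennreal ((2 * ((1 + 2 * r) / 2)) powr S)"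
    unfolding amalgam_at_radius_def S_def
  proof (rule mixnorm_enn_le_box[OF ss, where y = "\<lambda>_. 1 / 2"])
    fix y
    show "ennreal (measure (Rn n) (Rball n y r) powr e)
        * mixnorm ps (\<lambda>x. indicator (Rball n y r) x * indicator ?Q x) \<le> ennreal (C * m) * indicator ?Y y"
      by (rule outer)
  qed (use \<open>0 < r\<close> in auto)
  also have "\<dots> = ennreal (max (real n powr - (n * e)) (2 powr (n * e))
      * (r powr (n * e) * min 1 ((2 * r) powr P) * (1 + 2 * r) powr S))"
    unfolding two_r product[symmetric] using \<open>0 \<le> C\<close> \<open>0 \<le> m\<close> by (simp add: ennreal_mult)
  finally show ?thesis .
qed

lemma indicator_unit_cube_in_amalgam_space:
  assumes ps: "\<forall>p\<in>set ps. 1 \<le> p" "length ps = n" and ss: "\<forall>s\<in>set ss. 1 \<le> s" "length ss = n"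
    and n: "1 \<le> n"
    and "(\<Sum>s\<leftarrow>ss. inv_exp s) / real n \<le> inv_exp \<alpha>" and "inv_exp \<alpha> \<le> (\<Sum>p\<leftarrow>ps. inv_exp p) / real n"
  shows "indicator (cube n (\<lambda>_. 1 / 2) (1 / 2)) \<in> amalgam_space ps ss \<alpha>"
proof -
  define P where "P = (\<Sum>p\<leftarrow>ps. inv_exp p)"
  define S where "S = (\<Sum>s\<leftarrow>ss. inv_exp s)"
  define e where "e = inv_exp \<alpha> - P / n - S / n"
  have "0 \<le> S"
    unfolding S_def using ss(1)
    by (induction ss) (auto simp: inv_exp_def split: if_splits elim!: ereal_ge_1_cases)
  moreover have "0 \<le> n * e + P" "n * e + S \<le> 0"
    using assms(6,7) n by (simp_all add: e_def P_def S_def field_simps)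
  ultimately obtain K where K: "\<And>r. 0 < r \<Longrightarrow> r powr (n * e) * min 1 ((2 * r) powr P) * (1 + 2 * r) powr S \<le> K"
    using powr_profile_bounded[of S "n * e" P] by auto
  define M where "M = max (real n powr - (n * e)) (2 powr (n * e))"
  have bounded: "amalgam_at_radius n ps ss e (indicator (cube n (\<lambda>_. 1 / 2) (1 / 2))) r \<le> ennreal (M * K)"
    if "0 < r" for r
  proof -
    have "0 \<le> M"
      by (simp add: M_def le_max_iff_disj)
    with K[OF that] have "M * (r powr (n * e) * min 1 ((2 * r) powr P) * (1 + 2 * r) powr S) \<le> M * K"
      by (intro mult_left_mono)
    then show ?thesis
      using amalgam_at_radius_unit_cube_le[OF ps ss n that, of e] unfolding P_def S_def M_def
      by (meson ennreal_leI order_trans)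
  qed
  then have "amalgam_norm ps ss \<alpha> (indicator (cube n (\<lambda>_. 1 / 2) (1 / 2))) \<le> ennreal (M * K)"
    unfolding amalgam_norm_eq_SUP using ps(2) bounded by (auto simp: e_def P_def S_def intro!: SUP_least)
  then have "amalgam_norm ps ss \<alpha> (indicator (cube n (\<lambda>_. 1 / 2) (1 / 2))) < \<infinity>"
    by (simp add: order_le_less_trans)
  then show ?thesis
    using indicator_in_L1loc[OF cube_in_sets n] ps(2) by (simp add: amalgam_space_def)
qed

lemma indicator_unit_cube_not_AE_zero:
  "\<not> (AE x in Rn n. (indicator (cube n (\<lambda>_. 1 / 2) (1 / 2)) x :: real) = 0)"
proof -
  have "emeasure (Rn n) (cube n (\<lambda>_. 1 / 2) (1 / 2)) = 1"
    by (simp add: emeasure_cube)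
  then show ?thesis
    using cube_subset_space[of n "\<lambda>_. 1 / 2" "1 / 2"]
    by (subst AE_iff_measurable[OF cube_in_sets]) (auto simp: indicator_def)
qed

section \<open>Necessity\<close>

lemma not_filterlim_at_top_if_ennreal_bounded:
  fixes g :: "'a \<Rightarrow> real"
  assumes "F \<noteq> bot" and "B < top" and "\<forall>\<^sub>F x in F. ennreal (g x) \<le> B"
  shows "\<not> filterlim g at_top F"
proof
  assume "filterlim g at_top F"
  then have "\<forall>\<^sub>F x in F. enn2real B < g x"
    by (simp add: filterlim_at_top_dense)
  with assms(3) have "\<forall>\<^sub>F x in F. False"
  proof eventually_elim
    case (elim x)
    then have "ennreal (g x) \<le> ennreal (enn2real B)"
      using assms(2) by simp
    then have "g x \<le> enn2real B"
      using ennreal_le_iff[OF enn2real_nonneg] by blast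
    with elim show False
      by simp
  qed
  with assms(1) show False
    by (simp add: eventually_False)
qed

lemma powr_exponent_nonpos_if_bounded_at_top:
  fixes c \<delta> :: real
  assumes "0 < c" and "B < top" and "\<forall>\<^sub>F r in at_top. ennreal (c * r powr \<delta>) \<le> B"
  shows "\<delta> \<le> 0"
proof (rule ccontr)
  assume "\<not> \<delta> \<le> 0"
  then have "filterlim (\<lambda>r. c * r powr \<delta>) at_top at_top"
    using assms(1) by real_asymp
  with not_filterlim_at_top_if_ennreal_bounded[OF _ assms(2,3)] show False
    by simp
qed

lemma powr_exponent_nonneg_if_bounded_at_right_0:
  fixes c \<delta> :: real
  assumes "0 < c" and "B < top" and "\<forall>\<^sub>F r in at_right 0. ennreal (c * r powr \<delta>) \<le> B"
  shows "0 \<le> \<delta>"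
proof (rule ccontr)
  assume "\<not> 0 \<le> \<delta>"
  then have "filterlim (\<lambda>r. c * r powr \<delta>) at_top (at_right 0)"
    using assms(1) by real_asymp
  with not_filterlim_at_top_if_ennreal_bounded[OF _ assms(2,3)] show False
    by simp
qed

lemma ex_cube_containing: "x \<in> space (Rn n) \<Longrightarrow> \<exists>k. x \<in> cube n z (real (Suc k))"
proof -
  assume x: "x \<in> space (Rn n)"
  obtain k :: nat where k: "(\<Sum>i<n. \<bar>x i - z i\<bar>) \<le> real k"
    using real_arch_simple by blast
  have "\<bar>x i - z i\<bar> \<le> real (Suc k)" if "i < n" for i
  proof -
    have "\<bar>x i - z i\<bar> \<le> (\<Sum>i<n. \<bar>x i - z i\<bar>)"
      using that by (intro member_le_sum) auto
    with k show ?thesis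
      by simp
  qed
  with x show ?thesis
    by (auto simp: mem_cube_iff)
qed

lemma cube_mass_if_not_AE_zero:
  assumes [measurable]: "f \<in> borel_measurable (Rn n)" and "\<not> (AE x in Rn n. f x = 0)"
  obtains R \<mu> where "0 < R" and "0 < \<mu>"
    and "ennreal \<mu> \<le> (\<integral>\<^sup>+x. ennreal \<bar>f x\<bar> * indicator (cube n (\<lambda>_. 0) R) x \<partial>Rn n)"
proof -
  let ?m = "\<lambda>k. \<integral>\<^sup>+x. ennreal \<bar>f x\<bar> * indicator (cube n (\<lambda>_. 0) (real (Suc k))) x \<partial>Rn n"
  have "\<exists>k. 0 < ?m k"
  proof (rule ccontr)
    assume "\<nexists>k. 0 < ?m k"
    then have "AE x in Rn n. ennreal \<bar>f x\<bar> * indicator (cube n (\<lambda>_. 0) (real (Suc k))) x = 0" for k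
      by (simp add: nn_integral_0_iff_AE)
    then have "AE x in Rn n. \<forall>k. ennreal \<bar>f x\<bar> * indicator (cube n (\<lambda>_. 0) (real (Suc k))) x = 0"
      by (subst AE_all_countable) blast
    then have "AE x in Rn n. f x = 0"
    proof (rule AE_mp[OF _ AE_I2], intro impI)
      fix x
      assume "x \<in> space (Rn n)"
        and zero: "\<forall>k. ennreal \<bar>f x\<bar> * indicator (cube n (\<lambda>_. 0) (real (Suc k))) x = 0"
      then obtain k where "x \<in> cube n (\<lambda>_. 0) (real (Suc k))"
        using ex_cube_containing by blast
      with zero[rule_format, of k] show "f x = 0"
        by simp
    qed
    with assms(2) show False
      by simp
  qed
  then obtain k where k: "0 < ?m k"
    by blast
  have "0 < min (?m k) 1" and "min (?m k) 1 < top"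
    using k by (auto simp: min_less_iff_disj)
  then have "0 < enn2real (min (?m k) 1)" and "ennreal (enn2real (min (?m k) 1)) \<le> ?m k"
    by (auto simp: enn2real_positive_iff)
  then show ?thesis
    using that[of "real (Suc k)"] by simp
qed

lemma Rball_commute: "x \<in> space (Rn n) \<Longrightarrow> y \<in> space (Rn n) \<Longrightarrow> x \<in> Rball n y r \<longleftrightarrow> y \<in> Rball n x r"
  by (simp add: Rball_eq Rdist_commute)

interpretation Rn_pair: pair_sigma_finite "Rn n" "Rn m"
  by (simp add: pair_sigma_finite_def Rn.sigma_finite_measure_axioms)

lemma measurable_Rball_kernel:
  assumes [measurable]: "f \<in> borel_measurable (Rn n)" "K \<in> sets (Rn n)"
  shows "(\<lambda>(y, x). ennreal \<bar>f x\<bar> * indicator (Rball n y r) x * indicator K y) \<in> borel_measurable (Rn n \<Otimes>\<^sub>M Rn n)"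
proof -
  have [measurable]: "(\<lambda>(y, x). Rdist n x y) \<in> borel_measurable (Rn n \<Otimes>\<^sub>M Rn n)"
    unfolding Rdist_def Rn_def by measurable
  have "(\<lambda>(y, x). ennreal \<bar>f x\<bar> * (if Rdist n x y < r then 1 else 0) * indicator K y)
      \<in> borel_measurable (Rn n \<Otimes>\<^sub>M Rn n)"
    by measurable
  then show ?thesis
    by (rule measurable_cong[THEN iffD1, rotated]) (auto simp: space_pair_measure Rball_eq)
qed

lemma emeasure_Rball_ge:
  assumes "1 \<le> n" and "0 < r"
  shows "ennreal ((r / n) ^ n) \<le> emeasure (Rn n) (Rball n y r)"
  using measure_Rball_bounds[OF assms, of y] by (simp add: emeasure_eq_ennreal_measure less_top)

lemma nn_integral_Rball_kernel_ge:
  assumes f [measurable]: "f \<in> borel_measurable (Rn n)" and "1 \<le> n" and "0 < r" and "R + r \<le> R'"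
  shows "ennreal ((r / n) ^ n) * (\<integral>\<^sup>+x. ennreal \<bar>f x\<bar> * indicator (cube n z R) x \<partial>Rn n)
    \<le> (\<integral>\<^sup>+y. \<integral>\<^sup>+x. ennreal \<bar>f x\<bar> * indicator (Rball n y r) x * indicator (cube n z R') y \<partial>Rn n \<partial>Rn n)"
proof -
  let ?H = "\<lambda>y x. ennreal \<bar>f x\<bar> * indicator (Rball n y r) x * indicator (cube n z R') y"
  have "ennreal ((r / n) ^ n) * (\<integral>\<^sup>+x. ennreal \<bar>f x\<bar> * indicator (cube n z R) x \<partial>Rn n)
      = (\<integral>\<^sup>+x. ennreal ((r / n) ^ n) * (ennreal \<bar>f x\<bar> * indicator (cube n z R) x) \<partial>Rn n)"
    by (rule nn_integral_cmult[symmetric]) measurable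
  also have "\<dots> \<le> (\<integral>\<^sup>+x. \<integral>\<^sup>+y. ?H y x \<partial>Rn n \<partial>Rn n)"
  proof (intro nn_integral_mono)
    fix x
    assume x: "x \<in> space (Rn n)"
    show "ennreal ((r / n) ^ n) * (ennreal \<bar>f x\<bar> * indicator (cube n z R) x) \<le> (\<integral>\<^sup>+y. ?H y x \<partial>Rn n)"
    proof (cases "x \<in> cube n z R")
      case True
      have "ennreal \<bar>f x\<bar> * indicator (Rball n x r) y \<le> ?H y x" if "y \<in> space (Rn n)" for y
        using Rball_commute[OF x that, of r] Rball_subset_cube_of_mem[OF True assms(4)]
        by (auto simp: indicator_def)
      then have "ennreal \<bar>f x\<bar> * emeasure (Rn n) (Rball n x r) \<le> (\<integral>\<^sup>+y. ?H y x \<partial>Rn n)"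
        by (subst nn_integral_cmult_indicator[symmetric]) (auto intro: nn_integral_mono)
      moreover have "ennreal ((r / n) ^ n) * ennreal \<bar>f x\<bar> \<le> ennreal \<bar>f x\<bar> * emeasure (Rn n) (Rball n x r)"
        using emeasure_Rball_ge[OF assms(2,3), of x] by (simp add: mult.commute mult_left_mono)
      ultimately show ?thesis
        using True by simp
    qed simp
  qed
  also have "\<dots> = (\<integral>\<^sup>+y. \<integral>\<^sup>+x. ?H y x \<partial>Rn n \<partial>Rn n)"
    using measurable_Rball_kernel[OF f cube_in_sets[of n z R'], where r = r] by (intro Rn_pair.Fubini') simp
  finally show ?thesis .
qed

lemma nn_integral_Rball_le_mixnorm:
  assumes ps: "\<forall>p\<in>set ps. 1 \<le> p" "length ps = n" and f [measurable]: "f \<in> borel_measurable (Rn n)"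
    and "0 < r"
  shows "(\<integral>\<^sup>+x. ennreal \<bar>f x\<bar> * indicator (Rball n y r) x \<partial>Rn n)
    \<le> ennreal ((2 * r) powr (n - (\<Sum>p\<leftarrow>ps. inv_exp p))) * mixnorm ps (\<lambda>x. indicator (Rball n y r) x * f x)"
proof -
  have "(\<integral>\<^sup>+x. ennreal \<bar>f x\<bar> * indicator (Rball n y r) x \<partial>Rn n)
      \<le> ennreal ((2 * r) powr (n - (\<Sum>p\<leftarrow>ps. inv_exp p)))
        * mixnorm_enn ps (\<lambda>x. ennreal \<bar>f x\<bar> * indicator (Rball n y r) x)"
    by (rule nn_integral_le_mixnorm_enn_cube[OF ps \<open>0 < r\<close>, where y = y])
      (use Rball_subset_cube in \<open>auto simp: indicator_def\<close>)
  also have "\<dots> \<le> ennreal ((2 * r) powr (n - (\<Sum>p\<leftarrow>ps. inv_exp p))) * mixnorm ps (\<lambda>x. indicator (Rball n y r) x * f x)"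
    unfolding mixnorm_def mixnorm_enn_def using ps(1)
    by (intro mult_left_mono mixnorm_aux_mono) (auto simp: indicator_def)
  finally show ?thesis .
qed

lemma mixnorm_Rball_ge_cube_mass:
  assumes ps: "\<forall>p\<in>set ps. 1 \<le> p" "length ps = n" and f [measurable]: "f \<in> borel_measurable (Rn n)"
    and "0 < R" and mass: "ennreal \<mu> \<le> (\<integral>\<^sup>+x. ennreal \<bar>f x\<bar> * indicator (cube n z R) x \<partial>Rn n)"
    and sub: "cube n z R \<subseteq> Rball n y r"
  shows "ennreal \<mu> \<le> ennreal ((2 * R) powr (n - (\<Sum>p\<leftarrow>ps. inv_exp p))) * mixnorm ps (\<lambda>x. indicator (Rball n y r) x * f x)"
proof -
  have "(\<integral>\<^sup>+x. ennreal \<bar>f x\<bar> * indicator (cube n z R) x \<partial>Rn n)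
      \<le> ennreal ((2 * R) powr (n - (\<Sum>p\<leftarrow>ps. inv_exp p)))
        * mixnorm_enn ps (\<lambda>x. ennreal \<bar>f x\<bar> * indicator (cube n z R) x)"
    by (rule nn_integral_le_mixnorm_enn_cube[OF ps \<open>0 < R\<close>, where y = z]) auto
  also have "\<dots> \<le> ennreal ((2 * R) powr (n - (\<Sum>p\<leftarrow>ps. inv_exp p))) * mixnorm ps (\<lambda>x. indicator (Rball n y r) x * f x)"
    unfolding mixnorm_def mixnorm_enn_def using ps(1) sub
    by (intro mult_left_mono mixnorm_aux_mono) (auto simp: indicator_def)
  finally have bound: "(\<integral>\<^sup>+x. ennreal \<bar>f x\<bar> * indicator (cube n z R) x \<partial>Rn n)
      \<le> ennreal ((2 * R) powr (n - (\<Sum>p\<leftarrow>ps. inv_exp p))) * mixnorm ps (\<lambda>x. indicator (Rball n y r) x * f x)" .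
  from mass bound show ?thesis
    by (rule order_trans)
qed

lemma amalgam_at_radius_ge_large_radius:
  assumes ps: "\<forall>p\<in>set ps. 1 \<le> p" "length ps = n" and ss: "\<forall>s\<in>set ss. 1 \<le> s" "length ss = n"
    and n: "1 \<le> n" and f [measurable]: "f \<in> borel_measurable (Rn n)"
    and mass: "ennreal \<mu> \<le> (\<integral>\<^sup>+x. ennreal \<bar>f x\<bar> * indicator (cube n (\<lambda>_. 0) R) x \<partial>Rn n)"
    and "0 < R" and r: "2 * n * R < r" and "0 \<le> c" and "0 \<le> \<mu>"
    and ball: "\<And>y. c * r powr (n * e) \<le> measure (Rn n) (Rball n y r) powr e"
  defines "P \<equiv> \<Sum>p\<leftarrow>ps. inv_exp p" and "S \<equiv> \<Sum>s\<leftarrow>ss. inv_exp s"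
  shows "ennreal (c * \<mu> * r powr (n * e) * (r / n) powr S)
    \<le> ennreal ((2 * R) powr (n - P)) * amalgam_at_radius n ps ss e f r"
proof -
  define \<rho> where "\<rho> = r / (2 * n)"
  define \<kappa> where "\<kappa> = c * r powr (n * e) * \<mu>"
  let ?C = "cube n (\<lambda>_. 0) R"
  let ?Y = "cube n (\<lambda>_. 0) \<rho>"
  let ?F = "\<lambda>y. ennreal (measure (Rn n) (Rball n y r) powr e) * mixnorm ps (\<lambda>x. indicator (Rball n y r) x * f x)"
  have "0 < 2 * real n * R"
    using n \<open>0 < R\<close> by simp
  with r have "0 < r"
    by linarith
  then have "0 < \<rho>"
    using n by (simp add: \<rho>_def)
  \<comment> \<open>Every ball of radius r centred in the cube Y contains the cube C carrying the mass of f.\<close>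
  have pointwise: "ennreal \<kappa> * indicator ?Y y \<le> ennreal ((2 * R) powr (n - P)) * ?F y" for y
  proof (cases "y \<in> ?Y")
    case True
    have "?C \<subseteq> Rball n y r"
      using True r n by (intro cube_subset_Rball[where \<rho> = \<rho>]) (auto simp: mem_cube_iff \<rho>_def field_simps)
    then have "ennreal \<mu> \<le> ennreal ((2 * R) powr (n - P)) * mixnorm ps (\<lambda>x. indicator (Rball n y r) x * f x)"
      unfolding P_def by (rule mixnorm_Rball_ge_cube_mass[OF ps f \<open>0 < R\<close> mass])
    moreover have "ennreal (c * r powr (n * e)) \<le> ennreal (measure (Rn n) (Rball n y r) powr e)"
      using ball by (rule ennreal_leI)
    ultimately have "ennreal (c * r powr (n * e)) * ennreal \<mu>
        \<le> ennreal (measure (Rn n) (Rball n y r) powr e)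
          * (ennreal ((2 * R) powr (n - P)) * mixnorm ps (\<lambda>x. indicator (Rball n y r) x * f x))"
      by (intro mult_mono) simp_all
    then show ?thesis
      using True \<open>0 \<le> c\<close> \<open>0 \<le> \<mu>\<close> by (simp add: \<kappa>_def ennreal_mult mult_ac)
  qed simp
  have "ennreal \<kappa> * ennreal ((2 * \<rho>) powr S) \<le> ennreal \<kappa> * mixnorm_enn ss (indicator ?Y)"
    unfolding S_def using mixnorm_enn_indicator_cube_ge[OF ss \<open>0 < \<rho>\<close>] by (rule mult_left_mono) simp
  also have "\<dots> = mixnorm_enn ss (\<lambda>y. ennreal \<kappa> * indicator ?Y y)"
    unfolding mixnorm_enn_def using ss(1) by (simp add: mixnorm_aux_cmult)
  also have "\<dots> \<le> mixnorm_enn ss (\<lambda>y. ennreal ((2 * R) powr (n - P)) * ?F y)"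
    unfolding mixnorm_enn_def using ss(1) pointwise by (rule mixnorm_aux_mono)
  also have "\<dots> = ennreal ((2 * R) powr (n - P)) * amalgam_at_radius n ps ss e f r"
    unfolding mixnorm_enn_def amalgam_at_radius_def using ss(1) by (simp add: mixnorm_aux_cmult)
  finally show ?thesis
    using \<open>0 \<le> c\<close> \<open>0 \<le> \<mu>\<close> \<open>0 < \<rho>\<close> by (simp add: \<kappa>_def \<rho>_def ennreal_mult mult_ac)
qed

lemma amalgam_at_radius_ge_small_radius:
  assumes ps: "\<forall>p\<in>set ps. 1 \<le> p" "length ps = n" and ss: "\<forall>s\<in>set ss. 1 \<le> s" "length ss = n"
    and n: "1 \<le> n" and f [measurable]: "f \<in> borel_measurable (Rn n)"
    and mass: "ennreal \<mu> \<le> (\<integral>\<^sup>+x. ennreal \<bar>f x\<bar> * indicator (cube n (\<lambda>_. 0) R) x \<partial>Rn n)"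
    and "0 < R" and r: "0 < r" "r \<le> 1" and "0 \<le> c" and "0 \<le> \<mu>"
    and ball: "\<And>y. c * r powr (n * e) \<le> measure (Rn n) (Rball n y r) powr e"
  defines "P \<equiv> \<Sum>p\<leftarrow>ps. inv_exp p" and "S \<equiv> \<Sum>s\<leftarrow>ss. inv_exp s"
  shows "ennreal (c * \<mu> * r powr (n * e) * (r / n) ^ n)
    \<le> ennreal ((2 * (R + 1)) powr (n - S) * (2 * r) powr (n - P)) * amalgam_at_radius n ps ss e f r"
proof -
  let ?K = "cube n (\<lambda>_. 0) (R + 1)"
  let ?F = "\<lambda>y. ennreal (measure (Rn n) (Rball n y r) powr e) * mixnorm ps (\<lambda>x. indicator (Rball n y r) x * f x)"
  define G where "G y = (\<integral>\<^sup>+x. ennreal \<bar>f x\<bar> * indicator (Rball n y r) x * indicator ?K y \<partial>Rn n)" for y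
  have "(\<lambda>(y, x). ennreal \<bar>f x\<bar> * indicator (Rball n y r) x * indicator ?K y) \<in> borel_measurable (Rn n \<Otimes>\<^sub>M Rn n)"
    by (rule measurable_Rball_kernel[OF f cube_in_sets])
  then have G_meas: "G \<in> borel_measurable (Rn n)"
    unfolding G_def by (rule Rn.borel_measurable_nn_integral)
  have G_le: "ennreal (c * r powr (n * e)) * G y \<le> ennreal ((2 * r) powr (n - P)) * ?F y" for y
  proof -
    have "G y \<le> (\<integral>\<^sup>+x. ennreal \<bar>f x\<bar> * indicator (Rball n y r) x \<partial>Rn n)"
      unfolding G_def by (intro nn_integral_mono) (simp add: indicator_def)
    also have "\<dots> \<le> ennreal ((2 * r) powr (n - P)) * mixnorm ps (\<lambda>x. indicator (Rball n y r) x * f x)"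
      unfolding P_def by (rule nn_integral_Rball_le_mixnorm[OF ps f r(1)])
    finally have "G y \<le> ennreal ((2 * r) powr (n - P)) * mixnorm ps (\<lambda>x. indicator (Rball n y r) x * f x)" .
    moreover have "ennreal (c * r powr (n * e)) \<le> ennreal (measure (Rn n) (Rball n y r) powr e)"
      using ball by (rule ennreal_leI)
    ultimately show ?thesis
      by (simp add: mult_mono mult.left_commute)
  qed
  have "ennreal (c * r powr (n * e)) * (ennreal ((r / n) ^ n) * ennreal \<mu>)
      \<le> ennreal (c * r powr (n * e)) * (\<integral>\<^sup>+y. G y \<partial>Rn n)"
    using order_trans[OF mult_left_mono[OF mass] nn_integral_Rball_kernel_ge[OF f n r(1), of R "R + 1"]] r(2)
    by (intro mult_left_mono) (auto simp: G_def)
  also have "\<dots> \<le> ennreal (c * r powr (n * e)) * (ennreal ((2 * (R + 1)) powr (n - S)) * mixnorm_enn ss G)"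
    unfolding S_def using \<open>0 < R\<close>
    by (intro mult_left_mono nn_integral_le_mixnorm_enn_cube[OF ss _ G_meas, where y = "\<lambda>_. 0"])
      (auto simp: G_def)
  also have "\<dots> = ennreal ((2 * (R + 1)) powr (n - S)) * mixnorm_enn ss (\<lambda>y. ennreal (c * r powr (n * e)) * G y)"
    unfolding mixnorm_enn_def using ss(1) by (simp add: mixnorm_aux_cmult mult.left_commute)
  also have "\<dots> \<le> ennreal ((2 * (R + 1)) powr (n - S)) * mixnorm_enn ss (\<lambda>y. ennreal ((2 * r) powr (n - P)) * ?F y)"
    unfolding mixnorm_enn_def using ss(1) G_le by (intro mult_left_mono mixnorm_aux_mono) auto
  also have "\<dots> = ennreal ((2 * (R + 1)) powr (n - S) * (2 * r) powr (n - P)) * amalgam_at_radius n ps ss e f r"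
    unfolding mixnorm_enn_def amalgam_at_radius_def using ss(1)
    by (simp add: mixnorm_aux_cmult ennreal_mult mult.assoc)
  finally show ?thesis
    using \<open>0 \<le> c\<close> \<open>0 \<le> \<mu>\<close> r by (simp add: ennreal_mult mult_ac)
qed

lemma ex_measure_Rball_powr_ge:
  assumes "1 \<le> n"
  obtains c where "0 < c" and "\<And>y r. 0 < r \<Longrightarrow> c * r powr (n * e) \<le> measure (Rn n) (Rball n y r) powr e"
  using measure_Rball_powr_bounds(1)[OF assms] assms that[of "min (real n powr - (n * e)) (2 powr (n * e))"]
  by simp

lemma amalgam_bounded_imp_exponent_le:
  assumes ps: "\<forall>p\<in>set ps. 1 \<le> p" "length ps = n" and ss: "\<forall>s\<in>set ss. 1 \<le> s" "length ss = n"
    and n: "1 \<le> n" and f: "f \<in> borel_measurable (Rn n)" "\<not> (AE x in Rn n. f x = 0)"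
    and bound: "\<And>r. 0 < r \<Longrightarrow> amalgam_at_radius n ps ss e f r \<le> B" and "B < top"
  shows "real n * e + (\<Sum>s\<leftarrow>ss. inv_exp s) \<le> 0"
proof -
  define P where "P = (\<Sum>p\<leftarrow>ps. inv_exp p)"
  define S where "S = (\<Sum>s\<leftarrow>ss. inv_exp s)"
  obtain R \<mu> where R: "0 < R" and \<mu>: "0 < \<mu>"
    and mass: "ennreal \<mu> \<le> (\<integral>\<^sup>+x. ennreal \<bar>f x\<bar> * indicator (cube n (\<lambda>_. 0) R) x \<partial>Rn n)"
    using cube_mass_if_not_AE_zero[OF f] by metis
  obtain c where c: "0 < c" "\<And>y r. 0 < r \<Longrightarrow> c * r powr (n * e) \<le> measure (Rn n) (Rball n y r) powr e"
    using ex_measure_Rball_powr_ge[OF n] by metis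
  have large: "ennreal (c * \<mu> * real n powr (- S) * r powr (n * e + S)) \<le> ennreal ((2 * R) powr (n - P)) * B"
    if r: "2 * n * R < r" for r
  proof -
    have "0 < 2 * real n * R"
      using n R by simp
    with r have "0 < r"
      by linarith
    then have "(r / n) powr S = real n powr (- S) * r powr S"
      by (subst powr_divide) (auto simp: powr_minus divide_inverse mult.commute)
    then have "ennreal (c * \<mu> * real n powr (- S) * r powr (n * e + S))
        = ennreal (c * \<mu> * r powr (n * e) * (r / n) powr S)"
      by (simp add: powr_add mult_ac)
    also have "\<dots> \<le> ennreal ((2 * R) powr (n - P)) * amalgam_at_radius n ps ss e f r"
      unfolding P_def S_def using c \<mu> \<open>0 < r\<close>
      by (intro amalgam_at_radius_ge_large_radius[OF ps ss n f(1) mass R r]) auto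
    also have "\<dots> \<le> ennreal ((2 * R) powr (n - P)) * B"
      using bound[OF \<open>0 < r\<close>] by (rule mult_left_mono) simp
    finally show ?thesis .
  qed
  have "\<forall>\<^sub>F r in at_top. ennreal (c * \<mu> * real n powr (- S) * r powr (n * e + S)) \<le> ennreal ((2 * R) powr (n - P)) * B"
    using eventually_gt_at_top[of "2 * n * R"] by eventually_elim (rule large)
  then show ?thesis
    using c(1) \<mu> n \<open>B < top\<close> unfolding S_def
    by (intro powr_exponent_nonpos_if_bounded_at_top) (auto simp: ennreal_mult_less_top)
qed

lemma amalgam_bounded_imp_exponent_ge:
  assumes ps: "\<forall>p\<in>set ps. 1 \<le> p" "length ps = n" and ss: "\<forall>s\<in>set ss. 1 \<le> s" "length ss = n"
    and n: "1 \<le> n" and f: "f \<in> borel_measurable (Rn n)" "\<not> (AE x in Rn n. f x = 0)"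
    and bound: "\<And>r. 0 < r \<Longrightarrow> amalgam_at_radius n ps ss e f r \<le> B" and "B < top"
  shows "0 \<le> real n * e + (\<Sum>p\<leftarrow>ps. inv_exp p)"
proof -
  define P where "P = (\<Sum>p\<leftarrow>ps. inv_exp p)"
  define S where "S = (\<Sum>s\<leftarrow>ss. inv_exp s)"
  obtain R \<mu> where R: "0 < R" and \<mu>: "0 < \<mu>"
    and mass: "ennreal \<mu> \<le> (\<integral>\<^sup>+x. ennreal \<bar>f x\<bar> * indicator (cube n (\<lambda>_. 0) R) x \<partial>Rn n)"
    using cube_mass_if_not_AE_zero[OF f] by metis
  obtain c where c: "0 < c" "\<And>y r. 0 < r \<Longrightarrow> c * r powr (n * e) \<le> measure (Rn n) (Rball n y r) powr e"
    using ex_measure_Rball_powr_ge[OF n] by metis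
  have "ennreal (c * \<mu> * real n powr (- n) * r powr (n * e + P)) \<le> ennreal ((2 * (R + 1)) powr (n - S) * 2 powr (n - P)) * B"
    if r: "0 < r" "r \<le> 1" for r
  proof -
    let ?D = "(2 * (R + 1)) powr (n - S) * 2 powr (n - P)"
    have "(r / n) ^ n = r powr n / n powr n"
      using r n by (simp add: powr_realpow[symmetric] powr_divide)
    moreover have "r powr (n - P) * r powr (n * e + P) = r powr (n * e) * r powr n"
      by (simp add: powr_add[symmetric] algebra_simps)
    ultimately have eq: "r powr (n - P) * (c * \<mu> * real n powr (- n) * r powr (n * e + P))
        = c * \<mu> * r powr (n * e) * (r / n) ^ n"
      by (simp add: powr_minus divide_inverse mult_ac)
    have "ennreal (r powr (n - P)) * ennreal (c * \<mu> * real n powr (- n) * r powr (n * e + P))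
        = ennreal (r powr (n - P) * (c * \<mu> * real n powr (- n) * r powr (n * e + P)))"
      using c(1) \<mu> by (simp add: ennreal_mult)
    also have "\<dots> = ennreal (c * \<mu> * r powr (n * e) * (r / n) ^ n)"
      by (simp only: eq)
    also have "\<dots> \<le> ennreal ((2 * (R + 1)) powr (n - S) * (2 * r) powr (n - P)) * amalgam_at_radius n ps ss e f r"
      unfolding P_def S_def using c \<mu> r
      by (intro amalgam_at_radius_ge_small_radius[OF ps ss n f(1) mass R]) auto
    also have "\<dots> = ennreal (r powr (n - P)) * (ennreal ?D * amalgam_at_radius n ps ss e f r)"
      using r R by (simp add: powr_mult ennreal_mult mult_ac)
    also have "\<dots> \<le> ennreal (r powr (n - P)) * (ennreal ?D * B)"
      using bound[OF r(1)] by (intro mult_left_mono) auto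
    finally show ?thesis
      using r(1) by (simp add: ennreal_mult_le_mult_iff)
  qed
  then have "\<forall>\<^sub>F r in at_right 0. ennreal (c * \<mu> * real n powr (- n) * r powr (n * e + P)) \<le> ennreal ((2 * (R + 1)) powr (n - S) * 2 powr (n - P)) * B"
    by (auto simp: eventually_at_right_field intro!: exI[of _ 1])
  then show ?thesis
    using c(1) \<mu> n \<open>B < top\<close> unfolding P_def
    by (intro powr_exponent_nonneg_if_bounded_at_right_0) (auto simp: ennreal_mult_less_top)
qed

theorem proposition2p3:
  fixes ps ss :: "ereal list" and \<alpha> :: ereal
  assumes "length ps = n" and "length ss = n" and "n \<ge> 1"
    and "\<forall>p\<in>set ps. 1 \<le> p" and "\<forall>s\<in>set ss. 1 \<le> s" and "1 \<le> \<alpha>"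
  shows "(\<exists>f \<in> amalgam_space ps ss \<alpha>. \<not> (AE x in Rn n. f x = 0)) \<longleftrightarrow>
         ((\<Sum>s\<leftarrow>ss. inv_exp s) / real n \<le> inv_exp \<alpha> \<and>
          inv_exp \<alpha> \<le> (\<Sum>p\<leftarrow>ps. inv_exp p) / real n)"
proof
  assume "\<exists>f \<in> amalgam_space ps ss \<alpha>. \<not> (AE x in Rn n. f x = 0)"
  then obtain f where f: "f \<in> amalgam_space ps ss \<alpha>" "\<not> (AE x in Rn n. f x = 0)"
    by blast
  define e where "e = inv_exp \<alpha> - (\<Sum>p\<leftarrow>ps. inv_exp p) / real n - (\<Sum>s\<leftarrow>ss. inv_exp s) / real n"
  have meas: "f \<in> borel_measurable (Rn n)" and finite: "amalgam_norm ps ss \<alpha> f < top"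
    using f(1) assms(1) by (auto simp: amalgam_space_def L1loc_def)
  have bound: "amalgam_at_radius n ps ss e f r \<le> amalgam_norm ps ss \<alpha> f" if "0 < r" for r
    unfolding amalgam_norm_eq_SUP e_def assms(1) using that by (intro SUP_upper) auto
  have "real n * e + (\<Sum>s\<leftarrow>ss. inv_exp s) \<le> 0" "0 \<le> real n * e + (\<Sum>p\<leftarrow>ps. inv_exp p)"
    using amalgam_bounded_imp_exponent_le[OF assms(4,1,5,2,3) meas f(2) bound finite]
      amalgam_bounded_imp_exponent_ge[OF assms(4,1,5,2,3) meas f(2) bound finite] by auto
  then show "(\<Sum>s\<leftarrow>ss. inv_exp s) / real n \<le> inv_exp \<alpha> \<and> inv_exp \<alpha> \<le> (\<Sum>p\<leftarrow>ps. inv_exp p) / real n"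
    using assms(3) by (simp add: e_def field_simps)
next
  assume "(\<Sum>s\<leftarrow>ss. inv_exp s) / real n \<le> inv_exp \<alpha> \<and> inv_exp \<alpha> \<le> (\<Sum>p\<leftarrow>ps. inv_exp p) / real n"
  then show "\<exists>f \<in> amalgam_space ps ss \<alpha>. \<not> (AE x in Rn n. f x = 0)"
    using indicator_unit_cube_in_amalgam_space[OF assms(4,1,5,2,3)] indicator_unit_cube_not_AE_zero
    by blast
qed

end
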